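(* In the setup below, with the $a_i,b_i,c_{i,j}$ fixed, $$\lim_{t\to0}\frac{\det\bigl(\langle\gamma_{s,t},\alpha_j\rangle\bigr)_{s\in S,\,1\le j\le g}}{\log^g|t|}=\pm1,$$ where $\alpha_1,\dots,\alpha_g$ are the elements $R(1;1,j|2;1,m)$ ($1<j\le N_1$, $1<m\le N_2$), $T(1,1|k,l|m,n)$ ($2\le k<m\le N$, $1\le l\le N_k$, $1\le n\le N_m$), $T(1,j|2,1|m,n)$ ($2\le j\le N_1$, $3\le m\le N$, $1\le n\le N_m$) of $K_2^T(X_t)$.
   Context: Let $N\ge2$, $N_i\ge1$, and $L_{i,j}=a_ix+b_iy+c_{i,j}$ ($1\le i\le N$, $1\le j\le N_i$) complex non-constant polynomials defining pairwise distinct lines, with $[i,k]:=a_ib_k-a_kb_i\ne0$ for $i\ne k$; assume no three of the lines $L_{i,j}=0$ meet in an affine point. For $t\in\mathbb C$ let $X_t$ be the normalisation of the projective closure of $\prod_{i,j}L_{i,j}=t$; for $t\ne0$ small it is a smooth compact Riemann surface of genus $g=\sum_{i<k}N_iN_k-\sum_iN_i+1$. In its function field, $R(i;j,k|l;m,n)=\{L_{i,j}/L_{i,k},L_{l,m}/L_{l,n}\}$ ($i\ne l$) and $T(i,j|k,l|m,n)=\bigl\{\frac{[i,m]}{[k,m]}\frac{L_{k,l}}{L_{i,j}},\frac{[i,k]}{[m,k]}\frac{L_{m,n}}{L_{i,j}}\bigr\}$ ($i,k,m$ distinct) are elements of $K_2^T(X_t)$ (kernel of all tame symbols). Regulator pairing: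 $\langle\gamma,\alpha\rangle=\frac1{2\pi}\int_\gamma\eta(\alpha)$, where $\eta$ is extended additively from $\eta(\{a,b\})=\log|a|\,d\arg b-\log|b|\,d\arg a$, for loops $\gamma$ avoiding zeroes and poles. Let $P_{i,j;k,l}$ be the intersection point of $L_{i,j}=0$ and $L_{k,l}=0$, $S=\{P_{i,j;k,l}:1\le i<k\le N,(i,j)\ne(1,1),(i,k,l)\ne(1,2,1)\}$ ($g$ elements). Loops: choose coordinates such that $x$-projection of $X_0$ is unramified away from intersection points and distinct intersection points have distinct $x$-coordinates; for $s$ an intersection point, a line $L$ through $s$ and a small circle $\gamma'$ around the $x$-coordinate of $s$, $\gamma_{s,0}$ is the lift of $\gamma'$ into $L$ and $\gamma_{s,t}\subset X_t$ is its continuous deformation lifting $\gamma'$ for small $t$ (a closed loop near $s$). *)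

theory Defs
  imports "HOL-Analysis.Analysis" "Jordan_Normal_Form.Determinant"
begin

text \<open>Points of the affine plane C^2 are pairs (x,y). The lines are indexed 1-based:
  group i in 1..N, member j in 1..Nn i.\<close>

type_synonym pt = "complex \<times> complex"

definition Lf :: "(nat \<Rightarrow> complex) \<Rightarrow> (nat \<Rightarrow> complex) \<Rightarrow> (nat \<Rightarrow> nat \<Rightarrow> complex)
    \<Rightarrow> nat \<Rightarrow> nat \<Rightarrow> pt \<Rightarrow> complex" where
  "Lf a b c i j p = a i * fst p + b i * snd p + c i j"

definition br :: "(nat \<Rightarrow> complex) \<Rightarrow> (nat \<Rightarrow> complex) \<Rightarrow> nat \<Rightarrow> nat \<Rightarrow> complex" where
  "br a b i k = a i * b k - a k * b i"

text \<open>intersection point P_{i,j;k,l} of L_{i,j}=0 and L_{k,l}=0 (Cramer's rule, i, k distinct)\<close>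
definition Pt :: "(nat \<Rightarrow> complex) \<Rightarrow> (nat \<Rightarrow> complex) \<Rightarrow> (nat \<Rightarrow> nat \<Rightarrow> complex)
    \<Rightarrow> nat \<Rightarrow> nat \<Rightarrow> nat \<Rightarrow> nat \<Rightarrow> pt" where
  "Pt a b c i j k l =
     ((b i * c k l - b k * c i j) / br a b i k, (a k * c i j - a i * c k l) / br a b i k)"

definition Fprod :: "(nat \<Rightarrow> complex) \<Rightarrow> (nat \<Rightarrow> complex) \<Rightarrow> (nat \<Rightarrow> nat \<Rightarrow> complex)
    \<Rightarrow> nat \<Rightarrow> (nat \<Rightarrow> nat) \<Rightarrow> pt \<Rightarrow> complex" where
  "Fprod a b c N Nn p = (\<Prod>i\<in>{1..N}. \<Prod>j\<in>{1..Nn i}. Lf a b c i j p)"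

type_synonym symb = "(pt \<Rightarrow> complex) \<times> (pt \<Rightarrow> complex)"

text \<open>Regulator pairing of a (piecewise smooth) loop gamma : [0,1] -> C^2 with a symbol {f,g}:
  (1/2pi) times the integral over the loop of log|f| d arg g - log|g| d arg f, where
  d arg h along the loop is Im((h o gamma)' / (h o gamma)) d theta.\<close>
definition pairing :: "(real \<Rightarrow> pt) \<Rightarrow> symb \<Rightarrow> real" where
  "pairing \<gamma> \<alpha> = (let f = fst \<alpha>; g = snd \<alpha> in
     integral {0..1} (\<lambda>\<theta>.
        ln (cmod (f (\<gamma> \<theta>))) *
          Im (vector_derivative (\<lambda>u. g (\<gamma> u)) (at \<theta> within {0..1}) / g (\<gamma> \<theta>))
      - ln (cmod (g (\<gamma> \<theta>))) *
          Im (vector_derivative (\<lambda>u. f (\<gamma> u)) (at \<theta> within {0..1}) / f (\<gamma> \<theta>)))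
     / (2 * pi))"

definition Rsym :: "(nat \<Rightarrow> complex) \<Rightarrow> (nat \<Rightarrow> complex) \<Rightarrow> (nat \<Rightarrow> nat \<Rightarrow> complex)
    \<Rightarrow> nat \<Rightarrow> nat \<Rightarrow> nat \<Rightarrow> nat \<Rightarrow> nat \<Rightarrow> nat \<Rightarrow> symb" where
  "Rsym a b c i j k l m n =
     (\<lambda>p. Lf a b c i j p / Lf a b c i k p, \<lambda>p. Lf a b c l m p / Lf a b c l n p)"

definition Tsym :: "(nat \<Rightarrow> complex) \<Rightarrow> (nat \<Rightarrow> complex) \<Rightarrow> (nat \<Rightarrow> nat \<Rightarrow> complex)
    \<Rightarrow> nat \<Rightarrow> nat \<Rightarrow> nat \<Rightarrow> nat \<Rightarrow> nat \<Rightarrow> nat \<Rightarrow> symb" where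
  "Tsym a b c i j k l m n =
     (\<lambda>p. br a b i m / br a b k m * Lf a b c k l p / Lf a b c i j p,
      \<lambda>p. br a b i k / br a b m k * Lf a b c m n p / Lf a b c i j p)"

text \<open>Labels of the elements alpha_1..alpha_g: RT j m stands for R(1;1,j|2;1,m),
  TT i j k l m n stands for T(i,j|k,l|m,n).\<close>
datatype atag = RT nat nat | TT nat nat nat nat nat nat

fun alpha_of :: "(nat \<Rightarrow> complex) \<Rightarrow> (nat \<Rightarrow> complex) \<Rightarrow> (nat \<Rightarrow> nat \<Rightarrow> complex)
    \<Rightarrow> atag \<Rightarrow> symb" where
  "alpha_of a b c (RT j m) = Rsym a b c 1 1 j 2 1 m"
| "alpha_of a b c (TT i j k l m n) = Tsym a b c i j k l m n"

definition alpha_tags :: "nat \<Rightarrow> (nat \<Rightarrow> nat) \<Rightarrow> atag set" where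
  "alpha_tags N Nn =
     {RT j m | j m. 1 < j \<and> j \<le> Nn 1 \<and> 1 < m \<and> m \<le> Nn 2}
   \<union> {TT 1 1 k l m n | k l m n. 2 \<le> k \<and> k < m \<and> m \<le> N \<and> 1 \<le> l \<and> l \<le> Nn k
        \<and> 1 \<le> n \<and> n \<le> Nn m}
   \<union> {TT 1 j 2 1 m n | j m n. 2 \<le> j \<and> j \<le> Nn 1 \<and> 3 \<le> m \<and> m \<le> N
        \<and> 1 \<le> n \<and> n \<le> Nn m}"

text \<open>Index tuples (i,j,k,l) of the points of S; the point is Pt a b c i j k l.
  Since no three lines are concurrent, distinct tuples give distinct points.\<close>
definition S_idx :: "nat \<Rightarrow> (nat \<Rightarrow> nat) \<Rightarrow> (nat \<times> nat \<times> nat \<times> nat) set" where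
  "S_idx N Nn = {(i,j,k,l). 1 \<le> i \<and> i < k \<and> k \<le> N \<and> 1 \<le> j \<and> j \<le> Nn i
      \<and> 1 \<le> l \<and> l \<le> Nn k \<and> (i,j) \<noteq> (1,1) \<and> (i,k,l) \<noteq> (1,2,1)}"

definition all_pts :: "(nat \<Rightarrow> complex) \<Rightarrow> (nat \<Rightarrow> complex) \<Rightarrow> (nat \<Rightarrow> nat \<Rightarrow> complex)
    \<Rightarrow> nat \<Rightarrow> (nat \<Rightarrow> nat) \<Rightarrow> pt set" where
  "all_pts a b c N Nn = {Pt a b c i j k l | i j k l. i \<in> {1..N} \<and> k \<in> {1..N} \<and> i \<noteq> k
      \<and> j \<in> {1..Nn i} \<and> l \<in> {1..Nn k}}"

definition genus :: "nat \<Rightarrow> (nat \<Rightarrow> nat) \<Rightarrow> nat" where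
  "genus N Nn = (\<Sum>k\<in>{1..N}. \<Sum>i\<in>{1..<k}. Nn i * Nn k) + 1 - (\<Sum>i\<in>{1..N}. Nn i)"

end

theory Submission
  imports Defs "HOL-Complex_Analysis.Complex_Analysis"
begin

(* Fix an intersection point P of two lines Z, Z' from different groups and a
   loop gamma_t in X_t lying over a small circle around pi(P), on the line Z for t = 0.
   Write h_X = L_X o gamma_t for every line X.
   (1) For X /= Z the functions h_X are uniformly bounded away from 0 and infinity as
       t -> 0 and wind once around 0 if X = Z', not at all otherwise.  Since the product of
       all h_X is the constant t, the logarithmic derivatives sum to zero; hence h_Z winds
       -1 times, log|h_Z| = log|t| + O(1), and all logarithmic derivatives stay bounded.
   (2) Consequently the pairing of gamma_t with a symbol {k L_A/L_B, k' L_C/L_D} equals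
       M log|t| + O(1) with an explicit leading coefficient M in {-1,0,1} depending only on
       A, B, C, D, Z, Z' (locale loop_at_point).
   (3) Matching every alpha_j with a point of S, the matrix of leading coefficients has
       exactly one non-vanishing permutation term, of modulus 1; since the determinant is
       a polynomial in the entries, the normalised determinant tends to +-1.
   The file first collects general analytic lemmas, then the algebra of the lines, the
   local analysis (1)-(2), the combinatorics (3), and finally the theorem. *)


section \<open>General facts from analysis\<close>

lemma eventually_uniformly_close:
  fixes F :: "complex \<Rightarrow> real \<Rightarrow> 'a::metric_space"
  assumes "\<delta> > 0" "continuous_on (cball 0 \<delta> \<times> {0..1}) (\<lambda>(t,\<theta>). F t \<theta>)" "e > 0"
  shows "\<forall>\<^sub>F t in at 0. t \<in> cball 0 \<delta> \<and> (\<forall>\<theta>\<in>{0..1}. dist (F t \<theta>) (F 0 \<theta>) < e)"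
proof -
  have "compact (cball (0::complex) \<delta> \<times> {0..(1::real)})"
    by (intro compact_Times) auto
  then have "uniformly_continuous_on (cball 0 \<delta> \<times> {0..1}) (\<lambda>(t,\<theta>). F t \<theta>)"
    using assms(2) compact_uniformly_continuous by blast
  then obtain d where d: "d > 0" and
    dd: "\<And>x x'. x \<in> cball 0 \<delta> \<times> {0..1} \<Longrightarrow> x' \<in> cball 0 \<delta> \<times> {0..1} \<Longrightarrow> dist x' x < d
        \<Longrightarrow> dist ((\<lambda>(t,\<theta>). F t \<theta>) x') ((\<lambda>(t,\<theta>). F t \<theta>) x) < e"
    unfolding uniformly_continuous_on_def using assms(3) by metis
  show ?thesis unfolding eventually_at
  proof (intro exI[of _ "min d \<delta>"] conjI allI impI ballI)
    show "min d \<delta> > 0" using d assms(1) by simp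
    fix t :: complex assume t: "t \<noteq> 0 \<and> dist t 0 < min d \<delta>"
    then show "t \<in> cball 0 \<delta>" by (simp add: dist_norm)
    fix \<theta> :: real assume th: "\<theta> \<in> {0..1}"
    have "dist (t,\<theta>) (0,\<theta>) = dist t 0" by (simp add: dist_Pair_Pair)
    then show "dist (F t \<theta>) (F 0 \<theta>) < e"
      using dd[of "(0,\<theta>)" "(t,\<theta>)"] t th assms(1) by (auto simp: dist_norm)
  qed
qed

lemma continuous_on_slice:
  fixes F :: "complex \<Rightarrow> real \<Rightarrow> 'a::topological_space"
  assumes "continuous_on (cball 0 \<delta> \<times> {0..1}) (\<lambda>(t,\<theta>). F t \<theta>)" "t \<in> cball 0 \<delta>"
  shows "continuous_on {0..1} (F t)"
proof -
  have "continuous_on {0..1} ((\<lambda>(t,\<theta>). F t \<theta>) \<circ> (\<lambda>\<theta>. (t,\<theta>)))"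
    by (rule continuous_on_compose[OF _ continuous_on_subset[OF assms(1)]])
       (use assms(2) in \<open>auto intro!: continuous_intros\<close>)
  then show ?thesis by (simp add: o_def)
qed

lemma eventually_bounded_away_from_zero:
  fixes F :: "complex \<Rightarrow> real \<Rightarrow> complex"
  assumes d: "\<delta> > 0" and cont: "continuous_on (cball 0 \<delta> \<times> {0..1}) (\<lambda>(t,\<theta>). F t \<theta>)"
    and nz: "\<forall>\<theta>\<in>{0..1}. F 0 \<theta> \<noteq> 0"
  shows "\<exists>C\<ge>1. \<forall>\<^sub>F t in at 0. \<forall>\<theta>\<in>{0..1}. 1/C \<le> cmod (F t \<theta>) \<and> cmod (F t \<theta>) \<le> C"
proof -
  have c0: "continuous_on {0..1} (\<lambda>\<theta>. cmod (F 0 \<theta>))"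
    using continuous_on_slice[OF cont] d by (intro continuous_intros) auto
  obtain \<theta>0 where t0: "\<theta>0 \<in> {0..1}" and mn: "\<forall>y\<in>{0..1}. cmod (F 0 \<theta>0) \<le> cmod (F 0 y)"
    using continuous_attains_inf[OF compact_Icc _ c0] by auto
  obtain \<theta>1 where mx: "\<forall>y\<in>{0..1}. cmod (F 0 y) \<le> cmod (F 0 \<theta>1)"
    using continuous_attains_sup[OF compact_Icc _ c0] by auto
  define m where "m = cmod (F 0 \<theta>0)"
  define M where "M = cmod (F 0 \<theta>1)"
  have mpos: "m > 0" using nz t0 m_def by auto
  define C where "C = max 1 (max (2/m) (M + m))"
  have C: "C \<ge> 1" "2/m \<le> C" "M + m \<le> C" unfolding C_def by auto
  have invC: "1/C \<le> m/2"
  proof -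
    have "2 \<le> C * m" using C(2) mpos by (simp add: pos_divide_le_eq)
    then show ?thesis using C(1) mpos by (simp add: field_simps)
  qed
  have "\<forall>\<^sub>F t in at 0. t \<in> cball 0 \<delta> \<and> (\<forall>\<theta>\<in>{0..1}. dist (F t \<theta>) (F 0 \<theta>) < m/2)"
    using eventually_uniformly_close[OF d cont, of "m/2"] mpos by simp
  then have "\<forall>\<^sub>F t in at 0. \<forall>\<theta>\<in>{0..1}. 1/C \<le> cmod (F t \<theta>) \<and> cmod (F t \<theta>) \<le> C"
  proof (rule eventually_mono, intro ballI conjI)
    fix t :: complex and \<theta> :: real
    assume H: "t \<in> cball 0 \<delta> \<and> (\<forall>\<theta>\<in>{0..1}. dist (F t \<theta>) (F 0 \<theta>) < m / 2)" and th: "\<theta> \<in> {0..1}"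
    have close: "cmod (F t \<theta> - F 0 \<theta>) < m/2" using H th by (simp add: dist_norm)
    have "m \<le> cmod (F 0 \<theta>)" "cmod (F 0 \<theta>) \<le> M" using mn mx th m_def M_def by auto
    moreover have "cmod (F 0 \<theta>) \<le> cmod (F t \<theta>) + cmod (F t \<theta> - F 0 \<theta>)"
      by (metis norm_triangle_sub norm_minus_commute)
    moreover have "cmod (F t \<theta>) \<le> cmod (F 0 \<theta>) + cmod (F t \<theta> - F 0 \<theta>)"
      by (metis norm_triangle_sub)
    ultimately show "1/C \<le> cmod (F t \<theta>)" "cmod (F t \<theta>) \<le> C"
      using close invC C(3) by linarith+
  qed
  then show ?thesis using C(1) by blast
qed

lemma eventually_common_bound:
  fixes F :: "'b \<Rightarrow> 'c \<Rightarrow> real \<Rightarrow> real"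
  assumes "finite A"
    and "\<And>x. x \<in> A \<Longrightarrow> \<exists>C\<ge>1. \<forall>\<^sub>F t in G. \<forall>\<theta>\<in>{0..1}. 1/C \<le> F x t \<theta> \<and> F x t \<theta> \<le> C"
  shows "\<exists>C\<ge>1. \<forall>\<^sub>F t in G. \<forall>x\<in>A. \<forall>\<theta>\<in>{0..1}. 1/C \<le> F x t \<theta> \<and> F x t \<theta> \<le> C"
  using assms
proof (induction A rule: finite_induct)
  case empty
  then show ?case by auto
next
  case (insert x A)
  obtain C1 where C1: "C1 \<ge> 1" "\<forall>\<^sub>F t in G. \<forall>\<theta>\<in>{0..1}. 1/C1 \<le> F x t \<theta> \<and> F x t \<theta> \<le> C1"
    using insert.prems by blast
  obtain C2 where C2: "C2 \<ge> 1" "\<forall>\<^sub>F t in G. \<forall>y\<in>A. \<forall>\<theta>\<in>{0..1}. 1/C2 \<le> F y t \<theta> \<and> F y t \<theta> \<le> C2"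
    using insert by blast
  have inv: "1 / max C1 C2 \<le> 1/C1" "1 / max C1 C2 \<le> 1/C2"
    using C1(1) C2(1) by (auto intro: divide_left_mono)
  have "\<forall>\<^sub>F t in G. \<forall>y\<in>insert x A. \<forall>\<theta>\<in>{0..1}. 1 / max C1 C2 \<le> F y t \<theta> \<and> F y t \<theta> \<le> max C1 C2"
    using eventually_conj[OF C1(2) C2(2)]
    by (rule eventually_mono) (use inv in \<open>fastforce simp: le_max_iff_disj\<close>)
  then show ?case using C1(1) by (intro exI[of _ "max C1 C2"]) auto
qed

lemma integral_logderiv_eq_winding:
  fixes f f' :: "real \<Rightarrow> complex"
  assumes der: "\<forall>\<theta>\<in>{0..1}. (f has_vector_derivative f' \<theta>) (at \<theta>)"
    and dcont: "continuous_on {0..1} f'" and nz: "\<forall>\<theta>\<in>{0..1}. f \<theta> \<noteq> 0"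
  shows "integral {0..1} (\<lambda>\<theta>. f' \<theta> / f \<theta>) = 2*pi*\<i>*winding_number f 0"
proof -
  have "f C1_differentiable_on {0..1}"
    unfolding C1_differentiable_on_def using der dcont by blast
  then have vp: "valid_path f"
    unfolding valid_path_def using C1_differentiable_imp_piecewise by blast
  have ni: "0 \<notin> path_image f" using nz by (auto simp: path_image_def)
  have "((\<lambda>x. 1/(f x - 0) * vector_derivative f (at x within {0..1})) has_integral
                (2*pi*\<i>*winding_number f 0)) {0..1}"
    using has_contour_integral_winding_number[OF vp ni] unfolding has_contour_integral_def .
  moreover have "1/(f x - 0) * vector_derivative f (at x within {0..1}) = f' x / f x"
    if x: "x \<in> {0..1}" for x
  proof -
    have "(f has_vector_derivative f' x) (at x within {0..1})"
      using der x has_vector_derivative_at_within by blast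
    then have "vector_derivative f (at x within {0..1}) = f' x"
      using vector_derivative_within_closed_interval[of 0 1 x] x by auto
    then show ?thesis by simp
  qed
  ultimately have "((\<lambda>x. f' x / f x) has_integral (2*pi*\<i>*winding_number f 0)) {0..1}"
    by (metis (mono_tags, lifting) has_integral_eq)
  then show ?thesis using integral_unique by metis
qed

text \<open>Argument principle for a deformation of loops: if the loop at t = 0 avoids 0, then for
  small t /= 0 the integral of the logarithmic derivative equals 2 pi i times the winding
  number of the loop at t = 0, since nearby loops have the same winding number.\<close>
lemma eventually_integral_logderiv_eq_winding:
  fixes K K' :: "complex \<Rightarrow> real \<Rightarrow> complex"
  assumes d: "\<delta> > 0" and cont: "continuous_on (cball 0 \<delta> \<times> {0..1}) (\<lambda>(t,\<theta>). K t \<theta>)"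
    and nz: "\<forall>\<theta>\<in>{0..1}. K 0 \<theta> \<noteq> 0"
    and loop: "\<forall>t\<in>cball 0 \<delta>. K t 0 = K t 1"
    and der: "\<forall>t\<in>cball 0 \<delta> - {0}. \<forall>\<theta>\<in>{0..1}. (K t has_vector_derivative K' t \<theta>) (at \<theta>)"
    and dcont: "\<forall>t\<in>cball 0 \<delta> - {0}. continuous_on {0..1} (K' t)"
  shows "\<forall>\<^sub>F t in at 0. integral {0..1} (\<lambda>\<theta>. K' t \<theta> / K t \<theta>) = 2*pi*\<i>*winding_number (K 0) 0"
proof -
  have c0: "continuous_on {0..1} (\<lambda>\<theta>. norm (K 0 \<theta>))"
    using continuous_on_slice[OF cont] d by (intro continuous_intros) auto
  obtain \<theta>0 where \<theta>0: "\<theta>0 \<in> {0..1}" and min: "\<forall>\<theta>\<in>{0..1}. norm (K 0 \<theta>0) \<le> norm (K 0 \<theta>)"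
    using continuous_attains_inf[OF compact_Icc _ c0] by auto
  have "norm (K 0 \<theta>0) > 0" using nz \<theta>0 by auto
  from eventually_uniformly_close[OF d cont this]
  have "\<forall>\<^sub>F t in at 0. t \<in> cball 0 \<delta> \<and> (\<forall>\<theta>\<in>{0..1}. norm (K t \<theta> - K 0 \<theta>) < norm (K 0 \<theta> - 0))"
    by (rule eventually_mono) (use min in \<open>force simp: dist_norm\<close>)
  moreover have "\<forall>\<^sub>F t in at (0::complex). t \<noteq> 0" by (auto simp: eventually_at intro!: exI[of _ 1])
  ultimately show ?thesis
  proof eventually_elim
    case (elim t)
    then have t: "t \<in> cball 0 \<delta> - {0}" and near: "\<And>\<theta>. \<theta> \<in> {0..1} \<Longrightarrow> norm (K t \<theta> - K 0 \<theta>) < norm (K 0 \<theta> - 0)"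
      by auto
    have "winding_number (K t) 0 = winding_number (K 0) 0"
      by (rule winding_number_nearby_loops_eq)
         (use continuous_on_slice[OF cont] loop t d near
           in \<open>auto simp: path_def pathstart_def pathfinish_def\<close>)
    moreover have "K t \<theta> \<noteq> 0" if "\<theta> \<in> {0..1}" for \<theta> using near[OF that] by auto
    ultimately show ?case using integral_logderiv_eq_winding[of "K t" "K' t"] der dcont t by auto
  qed
qed

lemma has_vector_derivative_unique_on_unit_interval:
  fixes f g :: "real \<Rightarrow> complex"
  assumes "\<theta> \<in> {0..1}" "(f has_vector_derivative A) (at \<theta> within {0..1})"
    "(g has_vector_derivative B) (at \<theta> within {0..1})" "\<forall>u\<in>{0..1}. f u = g u"
  shows "A = B"
proof -
  have "(g has_vector_derivative A) (at \<theta> within {0..1})"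
    by (rule has_vector_derivative_transform_within[OF assms(2) _ assms(1), of 1])
       (use assms(4) in auto)
  then have "vector_derivative g (at \<theta> within {0..1}) = A"
    using vector_derivative_within_closed_interval[of 0 1 \<theta>] assms(1) by auto
  moreover have "vector_derivative g (at \<theta> within {0..1}) = B"
    using vector_derivative_within_closed_interval[of 0 1 \<theta>] assms(1,3) by auto
  ultimately show ?thesis by simp
qed

lemma has_vector_derivative_divide_fun:
  fixes f g :: "real \<Rightarrow> complex"
  assumes "(f has_vector_derivative f') (at x within S)" "(g has_vector_derivative g') (at x within S)"
    "g x \<noteq> 0"
  shows "((\<lambda>u. f u / g u) has_vector_derivative (f' * g x - f x * g') / (g x)^2) (at x within S)"
proof -
  have "((\<lambda>u. f u / g u) has_derivative
      (\<lambda>h. - f x * (inverse (g x) * (h *\<^sub>R g') * inverse (g x)) + (h *\<^sub>R f') / g x)) (at x within S)"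
    using assms unfolding has_vector_derivative_def by (intro has_derivative_divide) auto
  moreover have "(\<lambda>h. - f x * (inverse (g x) * (h *\<^sub>R g') * inverse (g x)) + (h *\<^sub>R f') / g x)
      = (\<lambda>h. h *\<^sub>R ((f' * g x - f x * g') / (g x)^2))"
    using assms(3) by (auto simp: field_simps scaleR_conv_of_real power2_eq_square)
  ultimately show ?thesis unfolding has_vector_derivative_def by simp
qed

lemma integral_Im_unit_interval:
  fixes f :: "real \<Rightarrow> complex"
  assumes "continuous_on {0..1} f"
  shows "integral {0..1} (\<lambda>\<theta>. Im (f \<theta>)) = Im (integral {0..1} f)"
proof -
  have "(f has_integral integral {0..1} f) {0..1}"
    using integrable_continuous_real[OF assms] by (simp add: has_integral_integral)
  from has_integral_linear[OF this bounded_linear_Im]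
  show ?thesis by (simp add: o_def integral_unique)
qed

lemma abs_ln_le_ln_bound:
  fixes x C :: real
  assumes "1 \<le> C" "1/C \<le> x" "x \<le> C"
  shows "\<bar>ln x\<bar> \<le> ln C"
proof -
  have xp: "x > 0" using assms by (smt (verit) divide_pos_pos)
  have "ln x \<le> ln C" using assms xp by simp
  moreover have "ln (1/C) \<le> ln x" using assms xp by (subst ln_le_cancel_iff) auto
  moreover have "ln (1/C) = - ln C" using assms by (simp add: ln_div)
  ultimately show ?thesis by linarith
qed

lemma ln_norm_at_0: "filterlim (\<lambda>t::complex. ln (cmod t)) at_bot (at 0)"
proof -
  have "filterlim (\<lambda>t::complex. cmod t) (at_right 0) (at 0)"
  proof (rule tendsto_imp_filterlim_at_right)
    show "((\<lambda>t::complex. cmod t) \<longlongrightarrow> 0) (at 0)"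
      using tendsto_norm[OF tendsto_ident_at, of "0::complex" UNIV] by simp
    show "\<forall>\<^sub>F t in at (0::complex). 0 < cmod t" by (auto simp: eventually_at intro!: exI[of _ 1])
  qed
  then show ?thesis using ln_at_0 filterlim_compose by blast
qed

lemma tendsto_div_ln_norm:
  fixes F :: "complex \<Rightarrow> real"
  assumes "\<forall>\<^sub>F t in at 0. \<bar>F t - ln (cmod t) * M\<bar> \<le> K"
  shows "((\<lambda>t. F t / ln (cmod t)) \<longlongrightarrow> M) (at 0)"
proof -
  have L: "filterlim (\<lambda>t::complex. ln (cmod t)) at_infinity (at 0)"
    using filterlim_at_bot_imp_at_infinity[OF ln_norm_at_0] .
  have g0: "((\<lambda>t. \<bar>K / ln (cmod t)\<bar>) \<longlongrightarrow> 0) (at (0::complex))"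
    using tendsto_rabs_zero[OF tendsto_divide_0[OF tendsto_const L]] .
  have ln0: "\<forall>\<^sub>F t in at (0::complex). ln (cmod t) < 0"
    using ln_norm_at_0 by (simp add: filterlim_at_bot_dense)
  have "\<forall>\<^sub>F t in at 0. norm ((F t - ln (cmod t) * M) / ln (cmod t)) \<le> \<bar>K / ln (cmod t)\<bar>"
    using assms
  proof (rule eventually_mono)
    fix t assume H: "\<bar>F t - ln (cmod t) * M\<bar> \<le> K"
    have "norm ((F t - ln (cmod t) * M) / ln (cmod t)) = \<bar>F t - ln (cmod t) * M\<bar> / \<bar>ln (cmod t)\<bar>"
      by (simp add: abs_divide)
    also have "\<dots> \<le> K / \<bar>ln (cmod t)\<bar>" by (rule divide_right_mono[OF H]) simp
    also have "\<dots> \<le> \<bar>K / ln (cmod t)\<bar>" by (simp add: abs_divide divide_right_mono)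
    finally show "norm ((F t - ln (cmod t) * M) / ln (cmod t)) \<le> \<bar>K / ln (cmod t)\<bar>" .
  qed
  then have "((\<lambda>t. (F t - ln (cmod t) * M) / ln (cmod t)) \<longlongrightarrow> 0) (at 0)"
    by (rule Lim_null_comparison[OF _ g0])
  then have "((\<lambda>t. M + (F t - ln (cmod t) * M) / ln (cmod t)) \<longlongrightarrow> M) (at 0)"
    using tendsto_add[OF tendsto_const, of _ 0 _ M] by simp
  moreover have "\<forall>\<^sub>F t in at 0. M + (F t - ln (cmod t) * M) / ln (cmod t) = F t / ln (cmod t)"
    using ln0 by (rule eventually_mono) (simp add: field_simps)
  ultimately show ?thesis by (rule Lim_transform_eventually)
qed

lemma det_tendsto_div_ln_power:
  fixes F :: "nat \<Rightarrow> nat \<Rightarrow> complex \<Rightarrow> real" and E :: "nat \<Rightarrow> nat \<Rightarrow> real"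
  assumes lim: "\<And>u v. u < g \<Longrightarrow> v < g \<Longrightarrow> ((\<lambda>t. F u v t / ln (cmod t)) \<longlongrightarrow> E u v) (at 0)"
  shows "((\<lambda>t. Determinant.det (mat g g (\<lambda>(u,v). F u v t)) / (ln (cmod t)) ^ g)
           \<longlongrightarrow> Determinant.det (mat g g (\<lambda>(u,v). E u v))) (at 0)"
proof -
  define PS where "PS = {p. p permutes {0..<g}}"
  have detF: "Determinant.det (mat g g (\<lambda>(u,v). F u v t))
      = (\<Sum>p\<in>PS. signof p * (\<Prod>u = 0..<g. F u (p u) t))" for t
    unfolding PS_def by (subst det_def'[of _ g]) (auto intro!: sum.cong prod.cong)
  have detE: "Determinant.det (mat g g (\<lambda>(u,v). E u v)) = (\<Sum>p\<in>PS. signof p * (\<Prod>u = 0..<g. E u (p u)))"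
    unfolding PS_def by (subst det_def'[of _ g]) (auto intro!: sum.cong prod.cong)
  have eq: "Determinant.det (mat g g (\<lambda>(u,v). F u v t)) / (ln (cmod t)) ^ g
      = (\<Sum>p\<in>PS. signof p * (\<Prod>u = 0..<g. F u (p u) t / ln (cmod t)))" for t
    unfolding detF by (simp add: sum_divide_distrib prod_dividef)
  have "((\<lambda>t. \<Sum>p\<in>PS. signof p * (\<Prod>u = 0..<g. F u (p u) t / ln (cmod t)))
          \<longlongrightarrow> (\<Sum>p\<in>PS. signof p * (\<Prod>u = 0..<g. E u (p u)))) (at 0)"
  proof (intro tendsto_sum tendsto_mult tendsto_const tendsto_prod)
    fix p u assume p: "p \<in> PS" and u: "u \<in> {0..<g}"
    have "p u < g" using permutes_in_image[of p "{0..<g}" u] p u unfolding PS_def by auto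
    then show "((\<lambda>t. F u (p u) t / ln (cmod t)) \<longlongrightarrow> E u (p u)) (at 0)" using lim u by simp
  qed
  then show ?thesis unfolding eq detE .
qed

lemma det_single_permutation:
  fixes E :: "nat \<Rightarrow> nat \<Rightarrow> real"
  assumes f: "f permutes {..<g}"
    and others: "\<And>p. p permutes {..<g} \<Longrightarrow> (\<Prod>u<g. E u (p u)) \<noteq> 0 \<Longrightarrow> p = f"
  shows "Determinant.det (mat g g (\<lambda>(u,v). E u v)) = signof f * (\<Prod>u<g. E u (f u))"
proof -
  define PS where "PS = {p. p permutes {..<g}}"
  have "Determinant.det (mat g g (\<lambda>(u,v). E u v)) = (\<Sum>p\<in>PS. signof p * (\<Prod>u<g. E u (p u)))"
    unfolding PS_def by (subst det_def'[of _ g])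
      (auto simp: atLeast0LessThan intro!: sum.cong prod.cong)
  also have "\<dots> = signof f * (\<Prod>u<g. E u (f u)) + (\<Sum>p\<in>PS - {f}. signof p * (\<Prod>u<g. E u (p u)))"
    by (rule sum.remove) (use f in \<open>auto simp: PS_def finite_permutations\<close>)
  also have "(\<Sum>p\<in>PS - {f}. signof p * (\<Prod>u<g. E u (p u))) = 0"
    using others by (intro sum.neutral) (auto simp: PS_def)
  finally show ?thesis by simp
qed

text \<open>This bounds the logarithmic derivative of the
  one factor that tends to zero along the loops.\<close>
lemma norm_le_of_small_denominator:
  fixes hZ dZ v S1 S2 :: complex
  assumes e: "dZ / hZ = -(dZ * S1 + v * S2)" and nz: "hZ \<noteq> 0" and hs: "cmod hZ \<le> \<epsilon>"
    and s1: "cmod S1 \<le> A1" and s2: "cmod S2 \<le> A2" and eA: "\<epsilon> * A1 \<le> 1/2" and e2: "\<epsilon> \<le> 1/2"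
    and A2: "A2 \<ge> 0"
  shows "cmod dZ \<le> cmod v * A2"
proof -
  have e0: "0 \<le> \<epsilon>" using hs norm_ge_zero[of hZ] by linarith
  have h1: "dZ = - hZ * (dZ * S1 + v * S2)" using e nz by (simp add: field_simps)
  have "dZ * (1 + hZ * S1) - (- (hZ * v * S2)) = dZ - (- hZ * (dZ * S1 + v * S2))"
    by (simp add: algebra_simps)
  also have "\<dots> = 0" using h1 by simp
  finally have eq: "dZ * (1 + hZ * S1) = - (hZ * v * S2)" by (simp add: eq_neg_iff_add_eq_0)
  have "cmod (hZ * S1) \<le> \<epsilon> * A1" unfolding norm_mult by (intro mult_mono hs s1) (use e0 in auto)
  moreover have "cmod (1::complex) \<le> cmod (1 + hZ * S1) + cmod (hZ * S1)"
    using norm_triangle_ineq4[of "1 + hZ * S1" "hZ * S1"] by simp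
  ultimately have n1: "cmod (1 + hZ * S1) \<ge> 1/2" using eA by simp
  have n2: "cmod (hZ * v * S2) \<le> \<epsilon> * cmod v * A2" unfolding norm_mult
    by (intro mult_mono hs s2) (use e0 in auto)
  have "cmod dZ * (1/2) \<le> cmod dZ * cmod (1 + hZ * S1)" by (rule mult_left_mono[OF n1]) simp
  also have "\<dots> = cmod (hZ * v * S2)" using eq by (metis norm_minus_cancel norm_mult)
  finally have "cmod dZ * (1/2) \<le> \<epsilon> * cmod v * A2" using n2 by linarith
  moreover have "\<epsilon> * cmod v * A2 \<le> (1/2) * cmod v * A2"
    using e2 A2 by (intro mult_right_mono) auto
  ultimately show ?thesis by linarith
qed

lemma norm_sum_divide_le:
  fixes k z :: "'a \<Rightarrow> complex"
  assumes "C > 0" "\<And>x. x \<in> A \<Longrightarrow> 1/C \<le> cmod (z x)"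
  shows "cmod (\<Sum>x\<in>A. k x / z x) \<le> C * (\<Sum>x\<in>A. cmod (k x))"
proof -
  have "cmod (\<Sum>x\<in>A. k x / z x) \<le> (\<Sum>x\<in>A. cmod (k x / z x))" by (rule norm_sum)
  also have "\<dots> \<le> (\<Sum>x\<in>A. cmod (k x) * C)"
  proof (rule sum_mono)
    fix x assume x: "x \<in> A"
    have one: "1 \<le> C * cmod (z x)" using assms(1) assms(2)[OF x] by (simp add: divide_le_eq mult.commute)
    then have zpos: "cmod (z x) > 0" using assms(1) by (cases "cmod (z x) > 0") auto
    have "cmod (k x) * 1 \<le> cmod (k x) * (C * cmod (z x))" by (rule mult_left_mono[OF one]) simp
    then have "cmod (k x) / cmod (z x) \<le> cmod (k x) * C"
      using zpos by (simp add: pos_divide_le_eq mult.assoc)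
    then show "cmod (k x / z x) \<le> cmod (k x) * C" by (simp add: norm_divide)
  qed
  also have "\<dots> = C * (\<Sum>x\<in>A. cmod (k x))" by (simp add: sum_distrib_left mult.commute)
  finally show ?thesis .
qed


section \<open>The lines and their behaviour along the new x-coordinate\<close>

text \<open>A line is addressed by its index pair X = (i,j); L_X is its linear form.  The new
  x-coordinate pi(p) = pr x + qr y is the projection along which the loops are chosen.\<close>
definition LX :: "(nat \<Rightarrow> complex) \<Rightarrow> (nat \<Rightarrow> complex) \<Rightarrow> (nat \<Rightarrow> nat \<Rightarrow> complex)
    \<Rightarrow> nat \<times> nat \<Rightarrow> pt \<Rightarrow> complex" where
  "LX a b c X p = Lf a b c (fst X) (snd X) p"

definition xcoord :: "complex \<Rightarrow> complex \<Rightarrow> pt \<Rightarrow> complex" where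
  "xcoord pr qr p = pr * fst p + qr * snd p"

lemma Fprod_eq_prod_LX: "Fprod a b c N Nn p = (\<Prod>X\<in>Sigma {1..N} (\<lambda>i. {1..Nn i}). LX a b c X p)"
  unfolding Fprod_def LX_def by (subst prod.Sigma) (auto simp: case_prod_unfold)

lemma Pt_on_lines:
  assumes "br a b i k \<noteq> 0"
  shows "Lf a b c i j (Pt a b c i j k l) = 0" "Lf a b c k l (Pt a b c i j k l) = 0"
proof -
  define D where "D = br a b i k"
  have D: "D \<noteq> 0" using assms D_def by simp
  have "Lf a b c i j (Pt a b c i j k l)
      = (a i * (b i * c k l - b k * c i j) + b i * (a k * c i j - a i * c k l) + c i j * D) / D"
    unfolding Lf_def Pt_def D_def[symmetric] using D by (simp add: field_simps)
  also have "a i * (b i * c k l - b k * c i j) + b i * (a k * c i j - a i * c k l) + c i j * D = 0"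
    unfolding D_def br_def by (simp add: algebra_simps)
  finally show "Lf a b c i j (Pt a b c i j k l) = 0" by simp
  have "Lf a b c k l (Pt a b c i j k l)
      = (a k * (b i * c k l - b k * c i j) + b k * (a k * c i j - a i * c k l) + c k l * D) / D"
    unfolding Lf_def Pt_def D_def[symmetric] using D by (simp add: field_simps)
  also have "a k * (b i * c k l - b k * c i j) + b k * (a k * c i j - a i * c k l) + c k l * D = 0"
    unfolding D_def br_def by (simp add: algebra_simps)
  finally show "Lf a b c k l (Pt a b c i j k l) = 0" by simp
qed

lemma has_vector_derivative_linear_form:
  fixes f :: "real \<Rightarrow> pt" and \<alpha> \<beta> :: complex
  assumes "(f has_vector_derivative D) F"
  shows "((\<lambda>u. \<alpha> * fst (f u) + \<beta> * snd (f u)) has_vector_derivative \<alpha> * fst D + \<beta> * snd D) F"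
proof -
  have "((\<lambda>u. fst (f u)) has_vector_derivative fst D) F" "((\<lambda>u. snd (f u)) has_vector_derivative snd D) F"
    using has_derivative_fst[OF assms[unfolded has_vector_derivative_def]]
      has_derivative_snd[OF assms[unfolded has_vector_derivative_def]]
    by (simp_all add: has_vector_derivative_def)
  from has_vector_derivative_mult_right[OF this(1), of \<alpha>] has_vector_derivative_mult_right[OF this(2), of \<beta>]
  show ?thesis by (rule has_vector_derivative_add)
qed

text \<open>If pi is not constant on the line Z, the linear part of every L_X is a combination of
  the linear parts of L_Z and pi, with coefficients mu_X and lambda_X.\<close>
definition mu_coef :: "(nat \<Rightarrow> complex) \<Rightarrow> (nat \<Rightarrow> complex) \<Rightarrow> complex \<Rightarrow> complex
    \<Rightarrow> nat \<times> nat \<Rightarrow> nat \<times> nat \<Rightarrow> complex" where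
  "mu_coef a b pr qr Z X = (a (fst X) * qr - b (fst X) * pr) / (a (fst Z) * qr - b (fst Z) * pr)"

definition lam_coef :: "(nat \<Rightarrow> complex) \<Rightarrow> (nat \<Rightarrow> complex) \<Rightarrow> complex \<Rightarrow> complex
    \<Rightarrow> nat \<times> nat \<Rightarrow> nat \<times> nat \<Rightarrow> complex" where
  "lam_coef a b pr qr Z X = br a b (fst Z) (fst X) / (a (fst Z) * qr - b (fst Z) * pr)"

lemma coef_decomp:
  assumes "a (fst Z) * qr - b (fst Z) * pr \<noteq> 0"
  shows "a (fst X) = mu_coef a b pr qr Z X * a (fst Z) + lam_coef a b pr qr Z X * pr"
    "b (fst X) = mu_coef a b pr qr Z X * b (fst Z) + lam_coef a b pr qr Z X * qr"
proof -
  define D where "D = a (fst Z) * qr - b (fst Z) * pr"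
  have D: "D \<noteq> 0" using assms D_def by simp
  have "mu_coef a b pr qr Z X * a (fst Z) + lam_coef a b pr qr Z X * pr
      = ((a (fst X) * qr - b (fst X) * pr) * a (fst Z) + br a b (fst Z) (fst X) * pr) / D"
    unfolding mu_coef_def lam_coef_def D_def[symmetric] by (simp add: add_divide_distrib)
  also have "\<dots> = a (fst X) * D / D" unfolding D_def br_def by (simp add: algebra_simps)
  finally show "a (fst X) = mu_coef a b pr qr Z X * a (fst Z) + lam_coef a b pr qr Z X * pr"
    using D by simp
  have "mu_coef a b pr qr Z X * b (fst Z) + lam_coef a b pr qr Z X * qr
      = ((a (fst X) * qr - b (fst X) * pr) * b (fst Z) + br a b (fst Z) (fst X) * qr) / D"
    unfolding mu_coef_def lam_coef_def D_def[symmetric] by (simp add: add_divide_distrib)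
  also have "\<dots> = b (fst X) * D / D" unfolding D_def br_def by (simp add: algebra_simps)
  finally show "b (fst X) = mu_coef a b pr qr Z X * b (fst Z) + lam_coef a b pr qr Z X * qr"
    using D by simp
qed

lemma LX_decomp_const:
  assumes "a (fst Z) * qr - b (fst Z) * pr \<noteq> 0"
  shows "LX a b c X p - mu_coef a b pr qr Z X * LX a b c Z p - lam_coef a b pr qr Z X * xcoord pr qr p
       = LX a b c X q - mu_coef a b pr qr Z X * LX a b c Z q - lam_coef a b pr qr Z X * xcoord pr qr q"
proof -
  define m l where "m = mu_coef a b pr qr Z X" and "l = lam_coef a b pr qr Z X"
  have ha: "a (fst X) = m * a (fst Z) + l * pr" and hb: "b (fst X) = m * b (fst Z) + l * qr"
    using coef_decomp[where a=a and b=b and pr=pr and qr=qr and Z=Z and X=X, OF assms] unfolding m_def l_def by simp_all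
  show ?thesis unfolding m_def[symmetric] l_def[symmetric] LX_def Lf_def xcoord_def ha hb
    by (simp add: algebra_simps)
qed

text \<open>Kronecker symbol on line indices and the leading coefficient of the pairing of a
  loop around the point Z meet Z' (starting on Z) with a symbol {L_A/L_B, L_C/L_D}.\<close>
definition kron :: "nat \<times> nat \<Rightarrow> nat \<times> nat \<Rightarrow> real" where
  "kron X Y = (if X = Y then 1 else 0)"

definition lead_coef :: "nat \<times> nat \<Rightarrow> nat \<times> nat \<Rightarrow> nat \<times> nat \<Rightarrow> nat \<times> nat \<Rightarrow> nat \<times> nat
    \<Rightarrow> nat \<times> nat \<Rightarrow> real" where
  "lead_coef Z Z' A B C D = (kron A Z - kron B Z) * (kron C Z' - kron D Z')
     - (kron C Z - kron D Z) * (kron A Z' - kron B Z')"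

lemma lead_coef_swap: "lead_coef Z' Z A B C D = - lead_coef Z Z' A B C D"
  unfolding lead_coef_def by (simp add: algebra_simps)

text \<open>The bookkeeping identity behind the expansion of a pairing: substituting the integrals of
  the w_Y (2 pi times their windings wY) and of the ell_X w_Y (their log|t| parts kX L 2 pi wY
  plus remainders rXY) into the expansion of the pairing PP.\<close>
lemma pairing_expansion_algebra:
  fixes PP L pp lk lk' kA kB kC kD wA wB wC wD rAC rAD rBC rBD rCA rCB rDA rDB :: real
  assumes "PP = lk * (pp * wC - pp * wD) - lk' * (pp * wA - pp * wB)
     + ((rAC + kA * L * (pp * wC)) - (rAD + kA * L * (pp * wD)) - (rBC + kB * L * (pp * wC))
        + (rBD + kB * L * (pp * wD)))
     - ((rCA + kC * L * (pp * wA)) - (rCB + kC * L * (pp * wB)) - (rDA + kD * L * (pp * wA))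
        + (rDB + kD * L * (pp * wB)))"
  shows "PP - L * ((kA - kB) * (wC - wD) - (kC - kD) * (wA - wB)) * pp
     = pp * (lk * (wC - wD) - lk' * (wA - wB)) + (rAC - rAD - rBC + rBD) - (rCA - rCB - rDA + rDB)"
  using assms by (simp add: algebra_simps)


section \<open>Local analysis of one loop\<close>

text \<open>The setting of one loop: P lies on the lines Z and Z' (of different groups); gamma t,
  for t in the closed disc of radius delta, is a continuous family of closed loops in the
  fibre prod_X L_X = t lying over the circle |pi - pi(P)| = r, contained in the line Z for
  t = 0 and smooth for t /= 0.  Every other line X either has the same pi-direction as Z
  (lambda_X = 0) and misses P, or meets Z at a point whose pi-coordinate lies outside the
  circle.\<close>
locale loop_at_point =
  fixes a b :: "nat \<Rightarrow> complex" and c :: "nat \<Rightarrow> nat \<Rightarrow> complex"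
    and I :: "(nat \<times> nat) set" and pr qr :: complex and r \<delta> :: real
    and \<gamma> :: "complex \<Rightarrow> real \<Rightarrow> pt" and Z Z' :: "nat \<times> nat" and P :: pt
  assumes finite_I: "finite I" and Z_in: "Z \<in> I" and Z'_in: "Z' \<in> I" and Z_neq: "Z \<noteq> Z'"
    and delta_pos: "\<delta> > 0" and r_pos: "r > 0"
    and loop_cont: "continuous_on (cball 0 \<delta> \<times> {0..1}) (\<lambda>(t,\<theta>). \<gamma> t \<theta>)"
    and over_circle: "\<forall>t\<in>cball 0 \<delta>. \<forall>\<theta>\<in>{0..1}.
                 xcoord pr qr (\<gamma> t \<theta>) = xcoord pr qr P + complex_of_real r * cis (2*pi*\<theta>)"
    and on_fibre: "\<forall>t\<in>cball 0 \<delta>. \<forall>\<theta>\<in>{0..1}. (\<Prod>X\<in>I. LX a b c X (\<gamma> t \<theta>)) = t"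
    and closed: "\<forall>t\<in>cball 0 \<delta>. \<gamma> t 0 = \<gamma> t 1"
    and smooth: "\<forall>t\<in>cball 0 \<delta> - {0}. \<gamma> t C1_differentiable_on {0..1}"
    and on_Z: "\<forall>\<theta>\<in>{0..1}. LX a b c Z (\<gamma> 0 \<theta>) = 0"
    and pi_nonconst_Z: "a (fst Z) * qr - b (fst Z) * pr \<noteq> 0"
    and P_on_Z: "LX a b c Z P = 0" and P_on_Z': "LX a b c Z' P = 0"
    and lam_Z': "lam_coef a b pr qr Z Z' \<noteq> 0"
    and far_lines: "\<forall>X\<in>I - {Z,Z'}. (lam_coef a b pr qr Z X = 0 \<and> LX a b c X P \<noteq> 0)
                   \<or> (lam_coef a b pr qr Z X \<noteq> 0 \<and> r < cmod (LX a b c X P / lam_coef a b pr qr Z X))"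
begin

abbreviation "lam \<equiv> lam_coef a b pr qr Z"
abbreviation "mu \<equiv> mu_coef a b pr qr Z"

lemmas coef_decomp_Z = coef_decomp[where a=a and b=b and pr=pr and qr=qr and Z=Z, OF pi_nonconst_Z]
lemmas LX_decomp_Z = LX_decomp_const[where a=a and b=b and pr=pr and qr=qr and Z=Z, OF pi_nonconst_Z]

definition h :: "nat \<times> nat \<Rightarrow> complex \<Rightarrow> real \<Rightarrow> complex" where
  "h X t \<theta> = LX a b c X (\<gamma> t \<theta>)"

text \<open>On the line Z, L_X is an affine function of pi, so h_X(0) runs over a circle.\<close>
lemma h_at_0: "\<theta> \<in> {0..1} \<Longrightarrow> h X 0 \<theta> = LX a b c X P + lam X * r * cis (2*pi*\<theta>)"
proof -
  assume th: "\<theta> \<in> {0..1}"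
  have "h X 0 \<theta> - lam X * xcoord pr qr (\<gamma> 0 \<theta>) = LX a b c X P - lam X * xcoord pr qr P"
    using LX_decomp_Z[of c X "\<gamma> 0 \<theta>" P] on_Z P_on_Z th unfolding h_def by simp
  then show ?thesis using over_circle th delta_pos by (simp add: algebra_simps)
qed

lemma h_at_0_nonzero: assumes "X \<in> I" "X \<noteq> Z" "\<theta> \<in> {0..1}" shows "h X 0 \<theta> \<noteq> 0"
proof (cases "X = Z'")
  case True
  then show ?thesis using h_at_0[OF assms(3)] P_on_Z' lam_Z' r_pos by simp
next
  case False
  then have XI: "X \<in> I - {Z,Z'}" using assms by auto
  show ?thesis
  proof (cases "lam X = 0")
    case True
    then show ?thesis using far_lines XI h_at_0[OF assms(3)] by auto
  next
    case False
    then have gt: "r < cmod (LX a b c X P / lam X)" using far_lines XI by auto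
    have "h X 0 \<theta> = lam X * (LX a b c X P / lam X + r * cis (2*pi*\<theta>))"
      using h_at_0[OF assms(3)] False by (simp add: field_simps)
    moreover have "LX a b c X P / lam X + r * cis (2*pi*\<theta>) \<noteq> 0"
    proof
      assume "LX a b c X P / lam X + r * cis (2*pi*\<theta>) = 0"
      then have "LX a b c X P / lam X = - (r * cis (2*pi*\<theta>))" by (simp add: eq_neg_iff_add_eq_0)
      then have "cmod (LX a b c X P / lam X) = r" using r_pos by (simp add: norm_mult)
      then show False using gt by simp
    qed
    ultimately show ?thesis using False by simp
  qed
qed

lemma h_continuous: "continuous_on (cball 0 \<delta> \<times> {0..1}) (\<lambda>(t,\<theta>). h X t \<theta>)"
proof -
  have "continuous_on (cball 0 \<delta> \<times> {0..1}) ((LX a b c X) \<circ> (\<lambda>(t,\<theta>). \<gamma> t \<theta>))"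
    by (rule continuous_on_compose[OF loop_cont]) (auto simp: LX_def Lf_def intro!: continuous_intros)
  then show ?thesis unfolding h_def o_def by (simp add: case_prod_unfold)
qed

lemma h_continuous_slice: "t \<in> cball 0 \<delta> \<Longrightarrow> continuous_on {0..1} (h X t)"
  using continuous_on_slice[OF h_continuous] by blast

text \<open>For t /= 0 no h_X vanishes on the loop, since their product is t.\<close>
lemma h_nonzero: assumes "t \<in> cball 0 \<delta>" "t \<noteq> 0" "\<theta> \<in> {0..1}" "X \<in> I" shows "h X t \<theta> \<noteq> 0"
proof
  assume "h X t \<theta> = 0"
  then have "(\<Prod>X\<in>I. LX a b c X (\<gamma> t \<theta>)) = 0" using finite_I assms(4) unfolding h_def
    by (meson prod_zero_iff)
  then show False using on_fibre assms by auto
qed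

lemma eventually_in_disc: "\<forall>\<^sub>F t in at (0::complex). t \<in> cball 0 \<delta> \<and> t \<noteq> 0"
  unfolding eventually_at using delta_pos by (intro exI[of _ \<delta>]) (auto simp: dist_norm)

definition vel :: "complex \<Rightarrow> real \<Rightarrow> pt" where
  "vel t = (SOME D. (\<forall>x\<in>{0..1}. (\<gamma> t has_vector_derivative D x) (at x)) \<and> continuous_on {0..1} D)"

lemma vel: assumes "t \<in> cball 0 \<delta>" "t \<noteq> 0"
  shows "\<forall>x\<in>{0..1}. (\<gamma> t has_vector_derivative vel t x) (at x)" "continuous_on {0..1} (vel t)"
proof -
  have "\<exists>D. (\<forall>x\<in>{0..1}. (\<gamma> t has_vector_derivative D x) (at x)) \<and> continuous_on {0..1} D"
    using smooth assms unfolding C1_differentiable_on_def by blast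
  from someI_ex[OF this] show "\<forall>x\<in>{0..1}. (\<gamma> t has_vector_derivative vel t x) (at x)"
    "continuous_on {0..1} (vel t)" unfolding vel_def by blast+
qed

definition dh :: "nat \<times> nat \<Rightarrow> complex \<Rightarrow> real \<Rightarrow> complex" where
  "dh X t \<theta> = a (fst X) * fst (vel t \<theta>) + b (fst X) * snd (vel t \<theta>)"

definition dpi :: "complex \<Rightarrow> real \<Rightarrow> complex" where
  "dpi t \<theta> = pr * fst (vel t \<theta>) + qr * snd (vel t \<theta>)"

lemma has_vector_derivative_h: assumes "t \<in> cball 0 \<delta>" "t \<noteq> 0" "\<theta> \<in> {0..1}"
  shows "(h X t has_vector_derivative dh X t \<theta>) (at \<theta>)"
proof -
  have "((\<lambda>u. a (fst X) * fst (\<gamma> t u) + b (fst X) * snd (\<gamma> t u) + c (fst X) (snd X))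
      has_vector_derivative dh X t \<theta> + 0) (at \<theta>)"
    unfolding dh_def using vel(1)[OF assms(1,2)] assms(3)
    by (intro has_vector_derivative_add has_vector_derivative_linear_form has_vector_derivative_const)
       auto
  then show ?thesis unfolding h_def LX_def Lf_def by simp
qed

lemma dh_continuous: assumes "t \<in> cball 0 \<delta>" "t \<noteq> 0" shows "continuous_on {0..1} (dh X t)"
  unfolding dh_def using vel(2)[OF assms] by (intro continuous_intros) auto

lemma logderiv_continuous: assumes "t \<in> cball 0 \<delta>" "t \<noteq> 0" "Y \<in> I"
  shows "continuous_on {0..1} (\<lambda>\<theta>. dh Y t \<theta> / h Y t \<theta>)"
  by (intro continuous_on_divide dh_continuous h_continuous_slice assms) (use h_nonzero assms in auto)

lemma dh_decomp: "dh X t \<theta> = mu X * dh Z t \<theta> + lam X * dpi t \<theta>"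
  unfolding dh_def dpi_def using coef_decomp_Z[of X] by (simp add: algebra_simps)

text \<open>Since pi o gamma_t parametrises the circle of radius r, its speed is 2 pi r.\<close>
lemma norm_dpi: assumes t: "t \<in> cball 0 \<delta>" "t \<noteq> 0" and th: "\<theta> \<in> {0..1}"
  shows "cmod (dpi t \<theta>) = 2*pi*r"
proof -
  have d1: "((\<lambda>u. pr * fst (\<gamma> t u) + qr * snd (\<gamma> t u)) has_vector_derivative dpi t \<theta>)
      (at \<theta> within {0..1})"
    unfolding dpi_def
    by (intro has_vector_derivative_linear_form has_vector_derivative_at_within[OF vel(1)[OF t, rule_format, OF th]])
  have d2: "(circlepath (xcoord pr qr P) r has_vector_derivative (2 * pi * \<i> * r * exp (2 * of_real pi * \<i> * \<theta>)))
      (at \<theta> within {0..1})"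
    by (rule has_vector_derivative_at_within[OF has_vector_derivative_circlepath])
  have eq: "\<forall>u\<in>{0..1}. pr * fst (\<gamma> t u) + qr * snd (\<gamma> t u) = circlepath (xcoord pr qr P) r u"
    using over_circle t unfolding circlepath xcoord_def by (auto simp: cis_conv_exp mult_ac)
  have "dpi t \<theta> = 2 * pi * \<i> * r * exp (2 * of_real pi * \<i> * \<theta>)"
    by (rule has_vector_derivative_unique_on_unit_interval[OF th d1 d2 eq])
  moreover have "cmod (exp (2 * of_real pi * \<i> * \<theta>)) = 1"
    by (simp add: norm_exp_eq_Re)
  ultimately show ?thesis using r_pos by (simp add: norm_mult)
qed

text \<open>Differentiating prod_X h_X = t: the logarithmic derivatives sum to zero.\<close>
lemma logderiv_sum_zero: assumes t: "t \<in> cball 0 \<delta>" "t \<noteq> 0" and th: "\<theta> \<in> {0..1}"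
  shows "(\<Sum>X\<in>I. dh X t \<theta> / h X t \<theta>) = 0"
proof -
  define V where "V = (\<Sum>X\<in>I. dh X t \<theta> * (\<Prod>Y\<in>I-{X}. h Y t \<theta>))"
  have "((\<lambda>u. \<Prod>X\<in>I. h X t u) has_derivative
      (\<lambda>y. \<Sum>X\<in>I. (y *\<^sub>R dh X t \<theta>) * (\<Prod>Y\<in>I-{X}. h Y t \<theta>))) (at \<theta> within {0..1})"
    by (rule has_derivative_prod)
       (use has_vector_derivative_h[OF t th] has_vector_derivative_at_within
         in \<open>unfold has_vector_derivative_def, blast\<close>)
  moreover have "(\<lambda>y. \<Sum>X\<in>I. (y *\<^sub>R dh X t \<theta>) * (\<Prod>Y\<in>I-{X}. h Y t \<theta>)) = (\<lambda>y. y *\<^sub>R V)"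
    unfolding V_def by (auto simp: scaleR_conv_of_real sum_distrib_left mult.assoc)
  ultimately have d1: "((\<lambda>u. \<Prod>X\<in>I. h X t u) has_vector_derivative V) (at \<theta> within {0..1})"
    unfolding has_vector_derivative_def by simp
  have prod_t: "\<forall>u\<in>{0..1}. (\<Prod>X\<in>I. h X t u) = t" using on_fibre t unfolding h_def by auto
  have V0: "V = 0"
    by (rule has_vector_derivative_unique_on_unit_interval[OF th d1 has_vector_derivative_const prod_t])
  have "dh X t \<theta> / h X t \<theta> = dh X t \<theta> * (\<Prod>Y\<in>I-{X}. h Y t \<theta>) / t" if X: "X \<in> I" for X
  proof -
    have "t = h X t \<theta> * (\<Prod>Y\<in>I-{X}. h Y t \<theta>)"
      using prod_t th prod.remove[OF finite_I X, of "\<lambda>Y. h Y t \<theta>"] by simp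
    then show ?thesis using h_nonzero[OF t th X] t(2) by (auto simp: field_simps)
  qed
  then have "(\<Sum>X\<in>I. dh X t \<theta> / h X t \<theta>) = V / t" unfolding V_def by (simp add: sum_divide_distrib)
  then show ?thesis using V0 by simp
qed

text \<open>For X /= Z the functions h_X are bounded away from 0 and from infinity for small t,
  because their limits at t = 0 have no zeros.\<close>
lemma h_bounded_away:
  "\<exists>C\<ge>1. \<forall>\<^sub>F t in at 0. \<forall>X\<in>I-{Z}. \<forall>\<theta>\<in>{0..1}. 1/C \<le> cmod (h X t \<theta>) \<and> cmod (h X t \<theta>) \<le> C"
proof (rule eventually_common_bound)
  show "finite (I - {Z})" using finite_I by simp
  fix X assume "X \<in> I - {Z}"
  then show "\<exists>C\<ge>1. \<forall>\<^sub>F t in at 0. \<forall>\<theta>\<in>{0..1}. 1/C \<le> cmod (h X t \<theta>) \<and> cmod (h X t \<theta>) \<le> C"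
    using h_at_0_nonzero by (intro eventually_bounded_away_from_zero[OF delta_pos h_continuous]) auto
qed

lemma h_Z_small: assumes "\<epsilon> > 0" shows "\<forall>\<^sub>F t in at 0. \<forall>\<theta>\<in>{0..1}. cmod (h Z t \<theta>) < \<epsilon>"
  using eventually_uniformly_close[OF delta_pos h_continuous[of Z] assms]
  by (rule eventually_mono) (use on_Z in \<open>auto simp: h_def dist_norm\<close>)

lemma logderiv_Z_eq: assumes t: "t \<in> cball 0 \<delta>" "t \<noteq> 0" and th: "\<theta> \<in> {0..1}"
  shows "dh Z t \<theta> / h Z t \<theta> = - (dh Z t \<theta> * (\<Sum>X\<in>I-{Z}. mu X / h X t \<theta>)
                                    + dpi t \<theta> * (\<Sum>X\<in>I-{Z}. lam X / h X t \<theta>))"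
proof -
  have "(\<Sum>X\<in>I-{Z}. dh X t \<theta> / h X t \<theta>)
      = (\<Sum>X\<in>I-{Z}. dh Z t \<theta> * (mu X / h X t \<theta>) + dpi t \<theta> * (lam X / h X t \<theta>))"
  proof (rule sum.cong[OF refl])
    fix X
    show "dh X t \<theta> / h X t \<theta> = dh Z t \<theta> * (mu X / h X t \<theta>) + dpi t \<theta> * (lam X / h X t \<theta>)"
      unfolding dh_decomp[of X] by (simp add: add_divide_distrib mult.commute)
  qed
  also have "\<dots> = dh Z t \<theta> * (\<Sum>X\<in>I-{Z}. mu X / h X t \<theta>) + dpi t \<theta> * (\<Sum>X\<in>I-{Z}. lam X / h X t \<theta>)"
    by (simp add: sum.distrib sum_distrib_left)
  finally have "dh Z t \<theta> / h Z t \<theta> + (dh Z t \<theta> * (\<Sum>X\<in>I-{Z}. mu X / h X t \<theta>)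
      + dpi t \<theta> * (\<Sum>X\<in>I-{Z}. lam X / h X t \<theta>)) = 0"
    using logderiv_sum_zero[OF t th] sum.remove[OF finite_I Z_in, of "\<lambda>X. dh X t \<theta> / h X t \<theta>"] by simp
  then show ?thesis by (simp add: eq_neg_iff_add_eq_0 del: minus_add_distrib)
qed

definition Smu :: real where "Smu = (\<Sum>X\<in>I-{Z}. cmod (mu X))"
definition Slam :: real where "Slam = (\<Sum>X\<in>I-{Z}. cmod (lam X))"

lemma Smu_nonneg: "Smu \<ge> 0" and Slam_nonneg: "Slam \<ge> 0"
  unfolding Smu_def Slam_def by (simp_all add: sum_nonneg)

lemma sums_of_quotients_bounded:
  assumes C: "C \<ge> 1" and lower: "\<forall>X\<in>I-{Z}. 1/C \<le> cmod (h X t \<theta>)"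
  shows "cmod (\<Sum>X\<in>I-{Z}. mu X / h X t \<theta>) \<le> C * Smu"
    "cmod (\<Sum>X\<in>I-{Z}. lam X / h X t \<theta>) \<le> C * Slam"
  unfolding Smu_def Slam_def using C lower by (auto intro!: norm_sum_divide_le)

lemma dh_Z_bound:
  assumes t: "t \<in> cball 0 \<delta>" "t \<noteq> 0" and th: "\<theta> \<in> {0..1}" and C: "C \<ge> 1"
    and lower: "\<forall>X\<in>I-{Z}. 1/C \<le> cmod (h X t \<theta>)"
    and small: "cmod (h Z t \<theta>) \<le> 1 / (2 * (C * Smu + 1))"
  shows "cmod (dh Z t \<theta>) \<le> 2*pi*r * (C * Slam)"
proof -
  have A1: "C * Smu \<ge> 0" and A2: "C * Slam \<ge> 0" using C Smu_nonneg Slam_nonneg by simp_all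
  have "cmod (dh Z t \<theta>) \<le> cmod (dpi t \<theta>) * (C * Slam)"
  proof (rule norm_le_of_small_denominator[OF logderiv_Z_eq[OF t th] h_nonzero[OF t th Z_in] small])
    show "cmod (\<Sum>X\<in>I-{Z}. mu X / h X t \<theta>) \<le> C * Smu"
      "cmod (\<Sum>X\<in>I-{Z}. lam X / h X t \<theta>) \<le> C * Slam"
      using sums_of_quotients_bounded[OF C lower] by simp_all
    show "1 / (2 * (C * Smu + 1)) * (C * Smu) \<le> 1/2" "1 / (2 * (C * Smu + 1)) \<le> 1/2"
      using A1 by (simp_all add: field_simps)
  qed (use A2 in auto)
  then show ?thesis using norm_dpi[OF t th] by simp
qed

lemma dh_bound:
  assumes t: "t \<in> cball 0 \<delta>" "t \<noteq> 0" and th: "\<theta> \<in> {0..1}" and C: "C \<ge> 1"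
    and lower: "\<forall>X\<in>I-{Z}. 1/C \<le> cmod (h X t \<theta>)"
    and small: "cmod (h Z t \<theta>) \<le> 1 / (2 * (C * Smu + 1))"
  shows "cmod (dh X t \<theta>) \<le> cmod (mu X) * (2*pi*r * (C * Slam)) + cmod (lam X) * (2*pi*r)"
proof -
  have "cmod (dh X t \<theta>) \<le> cmod (mu X) * cmod (dh Z t \<theta>) + cmod (lam X) * cmod (dpi t \<theta>)"
    unfolding dh_decomp[of X] norm_mult[symmetric] by (rule norm_triangle_ineq)
  also have "\<dots> \<le> cmod (mu X) * (2*pi*r * (C * Slam)) + cmod (lam X) * (2*pi*r)"
    using dh_Z_bound[OF assms] norm_dpi[OF t th] by (simp add: mult_left_mono)
  finally show ?thesis .
qed

lemma logderiv_Z_bound: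
  assumes t: "t \<in> cball 0 \<delta>" "t \<noteq> 0" and th: "\<theta> \<in> {0..1}" and C: "C \<ge> 1"
    and lower: "\<forall>X\<in>I-{Z}. 1/C \<le> cmod (h X t \<theta>)"
    and small: "cmod (h Z t \<theta>) \<le> 1 / (2 * (C * Smu + 1))"
  shows "cmod (dh Z t \<theta> / h Z t \<theta>) \<le> 2*pi*r * (C * Slam) * (C * Smu + 1)"
proof -
  have "cmod (dh Z t \<theta> / h Z t \<theta>) \<le> cmod (dh Z t \<theta>) * cmod (\<Sum>X\<in>I-{Z}. mu X / h X t \<theta>)
      + cmod (dpi t \<theta>) * cmod (\<Sum>X\<in>I-{Z}. lam X / h X t \<theta>)"
    unfolding logderiv_Z_eq[OF t th] norm_minus_cancel norm_mult[symmetric] by (rule norm_triangle_ineq)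
  also have "\<dots> \<le> 2*pi*r * (C * Slam) * (C * Smu) + 2*pi*r * (C * Slam)"
    using sums_of_quotients_bounded[OF C lower] dh_Z_bound[OF assms] norm_dpi[OF t th] r_pos
      C Slam_nonneg Smu_nonneg by (intro add_mono mult_mono) auto
  finally show ?thesis by (simp add: algebra_simps)
qed

definition logderiv_bound :: "real \<Rightarrow> real" where
  "logderiv_bound C = 2*pi*r * (C * Slam) * (C * Smu + 1)
     + C * (\<Sum>X\<in>I. cmod (mu X) * (2*pi*r * (C * Slam)) + cmod (lam X) * (2*pi*r))"

lemma logderiv_bound_pointwise:
  assumes t: "t \<in> cball 0 \<delta>" "t \<noteq> 0" and th: "\<theta> \<in> {0..1}" and C: "C \<ge> 1"
    and lower: "\<forall>X\<in>I-{Z}. 1/C \<le> cmod (h X t \<theta>)"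
    and small: "cmod (h Z t \<theta>) \<le> 1 / (2 * (C * Smu + 1))"
    and X: "X \<in> I"
  shows "cmod (dh X t \<theta> / h X t \<theta>) \<le> logderiv_bound C"
proof -
  define T where "T Y = cmod (mu Y) * (2*pi*r * (C * Slam)) + cmod (lam Y) * (2*pi*r)" for Y
  have T: "T Y \<ge> 0" for Y unfolding T_def using r_pos C Slam_nonneg by simp
  have sum_T: "C * (\<Sum>Y\<in>I. T Y) \<ge> 0" using C T by (simp add: sum_nonneg)
  show ?thesis
  proof (cases "X = Z")
    case True
    then show ?thesis using logderiv_Z_bound[OF assms(1-6)] sum_T
      unfolding logderiv_bound_def T_def by simp
  next
    case False
    have inv: "1 / cmod (h X t \<theta>) \<le> C"
      using lower X False C by (simp add: divide_le_eq mult.commute)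
    have "cmod (dh X t \<theta> / h X t \<theta>) = cmod (dh X t \<theta>) * (1 / cmod (h X t \<theta>))" by (simp add: norm_divide)
    also have "\<dots> \<le> T X * C"
      using dh_bound[OF assms(1-6)] inv T unfolding T_def by (intro mult_mono) auto
    also have "\<dots> \<le> C * (\<Sum>Y\<in>I. T Y)"
      using C member_le_sum[OF X T finite_I] by (simp add: mult.commute)
    also have "\<dots> \<le> logderiv_bound C"
      unfolding logderiv_bound_def T_def using Smu_nonneg Slam_nonneg r_pos C by simp
    finally show ?thesis .
  qed
qed

lemma logderiv_bounded: "\<exists>C B. C \<ge> 1 \<and> (\<forall>\<^sub>F t in at 0. t \<in> cball 0 \<delta> \<and> t \<noteq> 0 \<and>
   (\<forall>\<theta>\<in>{0..1}. (\<forall>X\<in>I-{Z}. 1/C \<le> cmod (h X t \<theta>) \<and> cmod (h X t \<theta>) \<le> C) \<and>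
       (\<forall>X\<in>I. cmod (dh X t \<theta> / h X t \<theta>) \<le> B)))"
proof -
  obtain C where C: "C \<ge> 1"
    and bounds: "\<forall>\<^sub>F t in at 0. \<forall>X\<in>I-{Z}. \<forall>\<theta>\<in>{0..1}. 1/C \<le> cmod (h X t \<theta>) \<and> cmod (h X t \<theta>) \<le> C"
    using h_bounded_away by blast
  have "1 / (2 * (C * Smu + 1)) > 0" using C Smu_nonneg by (simp add: add_nonneg_pos)
  from h_Z_small[OF this] have small: "\<forall>\<^sub>F t in at 0. \<forall>\<theta>\<in>{0..1}. cmod (h Z t \<theta>) \<le> 1 / (2 * (C * Smu + 1))"
    by (rule eventually_mono) (auto intro: less_imp_le)
  have "\<forall>\<^sub>F t in at 0. t \<in> cball 0 \<delta> \<and> t \<noteq> 0 \<and>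
   (\<forall>\<theta>\<in>{0..1}. (\<forall>X\<in>I-{Z}. 1/C \<le> cmod (h X t \<theta>) \<and> cmod (h X t \<theta>) \<le> C) \<and>
       (\<forall>X\<in>I. cmod (dh X t \<theta> / h X t \<theta>) \<le> logderiv_bound C))"
    using eventually_conj[OF eventually_in_disc eventually_conj[OF bounds small]]
    by (rule eventually_mono) (use logderiv_bound_pointwise C in blast)
  then show ?thesis using C by blast
qed

text \<open>At t = 0, h_Y runs over the circle of radius |lambda_Y| r around L_Y(P) (a point if
  lambda_Y = 0); it encloses 0 exactly for Y = Z'.  Dividing by lambda_Y normalises it to a
  circlepath.\<close>
lemma winding_h_at_0:
  assumes Y: "Y \<in> I" "Y \<noteq> Z"
  shows "winding_number (\<lambda>\<theta>. h Y 0 \<theta> / (if lam Y = 0 then 1 else lam Y)) 0 = kron Y Z'"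
proof (cases "Y = Z'")
  case True
  have "\<And>\<theta>. 0 \<le> \<theta> \<Longrightarrow> \<theta> \<le> 1 \<Longrightarrow> h Y 0 \<theta> / (if lam Y = 0 then 1 else lam Y) = circlepath 0 r \<theta>"
    using h_at_0 P_on_Z' lam_Z' True by (auto simp: circlepath cis_conv_exp mult_ac)
  then have "winding_number (\<lambda>\<theta>. h Y 0 \<theta> / (if lam Y = 0 then 1 else lam Y)) 0
      = winding_number (circlepath 0 r) 0"
    by (rule winding_number_cong)
  also have "\<dots> = 1" using r_pos by (intro winding_number_circlepath) auto
  finally show ?thesis using True by (simp add: kron_def)
next
  case False
  then have YI: "Y \<in> I - {Z,Z'}" using Y by auto
  show ?thesis
  proof (cases "lam Y = 0")
    case True
    then have "LX a b c Y P \<noteq> 0" using far_lines YI by auto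
    then have "winding_number (\<lambda>\<theta>. h Y 0 \<theta> / (if lam Y = 0 then 1 else lam Y)) 0 = 0"
      by (rule winding_number_constI) (use h_at_0 True in auto)
    then show ?thesis using False by (simp add: kron_def)
  next
    case lam_nz: False
    define z where "z = LX a b c Y P / lam Y"
    have far: "r < cmod z" using far_lines YI lam_nz unfolding z_def by auto
    have "\<And>\<theta>. 0 \<le> \<theta> \<Longrightarrow> \<theta> \<le> 1 \<Longrightarrow> h Y 0 \<theta> / (if lam Y = 0 then 1 else lam Y) = circlepath z r \<theta>"
      unfolding z_def using h_at_0 lam_nz
      by (auto simp: circlepath cis_conv_exp mult_ac add_divide_distrib)
    then have "winding_number (\<lambda>\<theta>. h Y 0 \<theta> / (if lam Y = 0 then 1 else lam Y)) 0
        = winding_number (circlepath z r) 0"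
      by (rule winding_number_cong)
    also have "\<dots> = 0"
    proof (rule winding_number_zero_outside[of _ "cball z r"])
      show "0 \<notin> cball z r" using far by (simp add: dist_norm)
      show "path_image (circlepath z r) \<subseteq> cball z r"
        using r_pos by (simp add: path_image_circlepath_nonneg sphere_cball)
    qed auto
    finally show ?thesis using False by (simp add: kron_def)
  qed
qed

text \<open>By the argument principle, for small t the logarithmic derivative of h_Y (Y /= Z)
  integrates to 2 pi i times the winding number found at t = 0.\<close>
lemma integral_logderiv_off_Z: assumes Y: "Y \<in> I" "Y \<noteq> Z"
  shows "\<forall>\<^sub>F t in at 0. integral {0..1} (\<lambda>\<theta>. dh Y t \<theta> / h Y t \<theta>) = 2*pi*\<i>*kron Y Z'"
proof -
  define \<beta> where "\<beta> = (if lam Y = 0 then 1 else lam Y)"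
  have \<beta>: "\<beta> \<noteq> 0" unfolding \<beta>_def by auto
  define K where "K t \<theta> = h Y t \<theta> / \<beta>" for t \<theta>
  define K' where "K' t \<theta> = dh Y t \<theta> / \<beta>" for t \<theta>
  have "continuous_on (cball 0 \<delta> \<times> {0..1}) (\<lambda>x. (\<lambda>(t,\<theta>). h Y t \<theta>) x / \<beta>)"
    by (intro continuous_intros h_continuous) (use \<beta> in auto)
  then have contK: "continuous_on (cball 0 \<delta> \<times> {0..1}) (\<lambda>(t,\<theta>). K t \<theta>)"
    unfolding K_def by (simp add: case_prod_unfold)
  have nzK: "\<forall>\<theta>\<in>{0..1}. K 0 \<theta> \<noteq> 0" unfolding K_def using h_at_0_nonzero Y \<beta> by auto
  have loopK: "\<forall>t\<in>cball 0 \<delta>. K t 0 = K t 1" unfolding K_def h_def using closed by simp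
  have derK: "\<forall>t\<in>cball 0 \<delta> - {0}. \<forall>\<theta>\<in>{0..1}. (K t has_vector_derivative K' t \<theta>) (at \<theta>)"
    unfolding K_def K'_def by (auto intro!: has_vector_derivative_divide has_vector_derivative_h)
  have dcontK: "\<forall>t\<in>cball 0 \<delta> - {0}. continuous_on {0..1} (K' t)"
    unfolding K'_def using dh_continuous[where X=Y] \<beta> by (auto intro!: continuous_intros)
  have wn: "winding_number (K 0) 0 = kron Y Z'"
    using winding_h_at_0[OF Y] unfolding K_def \<beta>_def by simp
  have quot: "K' t \<theta> / K t \<theta> = dh Y t \<theta> / h Y t \<theta>" for t \<theta> unfolding K_def K'_def using \<beta> by simp
  show ?thesis
    using eventually_integral_logderiv_eq_winding[OF delta_pos contK nzK loopK derK dcontK]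
    unfolding quot wn .
qed

definition w :: "nat \<times> nat \<Rightarrow> complex \<Rightarrow> real \<Rightarrow> real" where
  "w Y t \<theta> = Im (dh Y t \<theta> / h Y t \<theta>)"

definition ell :: "nat \<times> nat \<Rightarrow> complex \<Rightarrow> real \<Rightarrow> real" where
  "ell X t \<theta> = ln (cmod (h X t \<theta>))"

lemma w_continuous: assumes "t \<in> cball 0 \<delta>" "t \<noteq> 0" "Y \<in> I" shows "continuous_on {0..1} (w Y t)"
  unfolding w_def by (intro continuous_intros logderiv_continuous[OF assms, unfolded o_def])

lemma ell_continuous: assumes "t \<in> cball 0 \<delta>" "t \<noteq> 0" "X \<in> I" shows "continuous_on {0..1} (ell X t)"
  unfolding ell_def by (intro continuous_intros h_continuous_slice assms(1)) (use h_nonzero assms in auto)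

text \<open>Taking imaginary parts in logderiv_sum_zero.\<close>
lemma w_Z_eq: assumes t: "t \<in> cball 0 \<delta>" "t \<noteq> 0" and th: "\<theta> \<in> {0..1}"
  shows "w Z t \<theta> = - (\<Sum>Y\<in>I-{Z}. w Y t \<theta>)"
proof -
  have "(\<Sum>Y\<in>I. w Y t \<theta>) = Im (\<Sum>Y\<in>I. dh Y t \<theta> / h Y t \<theta>)" unfolding w_def by (simp add: Im_sum)
  then have "(\<Sum>Y\<in>I. w Y t \<theta>) = 0" using logderiv_sum_zero[OF t th] by simp
  then show ?thesis using sum.remove[OF finite_I Z_in, of "\<lambda>Y. w Y t \<theta>"] by simp
qed

text \<open>Taking log|.| of prod_X h_X = t.\<close>
lemma ell_Z_eq: assumes t: "t \<in> cball 0 \<delta>" "t \<noteq> 0" and th: "\<theta> \<in> {0..1}"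
  shows "ell Z t \<theta> = ln (cmod t) - (\<Sum>X\<in>I-{Z}. ell X t \<theta>)"
proof -
  have "cmod t = (\<Prod>X\<in>I. cmod (h X t \<theta>))"
    using on_fibre t th unfolding h_def by (simp add: prod_norm)
  then have "ln (cmod t) = (\<Sum>X\<in>I. ell X t \<theta>)"
    unfolding ell_def using finite_I h_nonzero[OF t th] by (simp add: ln_prod)
  then show ?thesis using sum.remove[OF finite_I Z_in, of "\<lambda>X. ell X t \<theta>"] by simp
qed

text \<open>Total winding of h_Y along the loop: +1 for Z', -1 for Z, 0 otherwise.\<close>
definition wind :: "nat \<times> nat \<Rightarrow> real" where
  "wind Y = kron Y Z' - kron Y Z"

lemma integral_w_off_Z: assumes Y: "Y \<in> I" "Y \<noteq> Z"
  shows "\<forall>\<^sub>F t in at 0. integral {0..1} (w Y t) = 2*pi*wind Y"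
  using eventually_conj[OF integral_logderiv_off_Z[OF Y] eventually_in_disc]
proof (rule eventually_mono)
  fix t assume H: "integral {0..1} (\<lambda>\<theta>. dh Y t \<theta> / h Y t \<theta>) = 2*pi*\<i>*kron Y Z'
    \<and> t \<in> cball 0 \<delta> \<and> t \<noteq> 0"
  have "integral {0..1} (w Y t) = Im (integral {0..1} (\<lambda>\<theta>. dh Y t \<theta> / h Y t \<theta>))"
    unfolding w_def using integral_Im_unit_interval[OF logderiv_continuous[of t Y]] H Y by auto
  then show "integral {0..1} (w Y t) = 2*pi*wind Y" using H Y unfolding wind_def kron_def by auto
qed

lemma integral_w: assumes Y: "Y \<in> I"
  shows "\<forall>\<^sub>F t in at 0. integral {0..1} (w Y t) = 2*pi*wind Y"
proof (cases "Y = Z")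
  case False
  then show ?thesis using integral_w_off_Z Y by blast
next
  case True
  have "\<forall>\<^sub>F t in at 0. \<forall>Y\<in>I-{Z}. integral {0..1} (w Y t) = 2*pi*wind Y"
    using finite_I integral_w_off_Z by (intro eventually_ball_finite) auto
  then have "\<forall>\<^sub>F t in at 0. integral {0..1} (w Z t) = 2*pi*wind Z"
    using eventually_in_disc
  proof (eventually_elim)
    case (elim t)
    then have t: "t \<in> cball 0 \<delta>" "t \<noteq> 0" by auto
    have intg: "w Y t integrable_on {0..1}" if "Y \<in> I" for Y
      using integrable_continuous_real[OF w_continuous[OF t that]] .
    have "integral {0..1} (w Z t) = integral {0..1} (\<lambda>\<theta>. - (\<Sum>Y\<in>I-{Z}. w Y t \<theta>))"
      by (rule integral_cong) (use w_Z_eq[OF t] in auto)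
    also have "\<dots> = - (\<Sum>Y\<in>I-{Z}. integral {0..1} (w Y t))"
      by (subst integral_neg, subst integral_sum) (use finite_I intg in \<open>auto intro!: integrable_sum\<close>)
    also have "\<dots> = - (\<Sum>Y\<in>I-{Z}. if Y = Z' then 2*pi else 0)"
      using elim unfolding wind_def kron_def by (intro arg_cong[where f=uminus] sum.cong) auto
    also have "\<dots> = 2*pi*wind Z"
      using Z'_in Z_neq finite_I unfolding wind_def kron_def by (simp add: sum.delta')
    finally show ?case .
  qed
  then show ?thesis using True by simp
qed

definition good_at :: "real \<Rightarrow> real \<Rightarrow> complex \<Rightarrow> bool" where
  "good_at C B t \<longleftrightarrow> t \<in> cball 0 \<delta> \<and> t \<noteq> 0 \<and>
     (\<forall>\<theta>\<in>{0..1}. (\<forall>X\<in>I-{Z}. 1/C \<le> cmod (h X t \<theta>) \<and> cmod (h X t \<theta>) \<le> C) \<and>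
       (\<forall>X\<in>I. cmod (dh X t \<theta> / h X t \<theta>) \<le> B))"

lemma integral_ell_w_off_Z_bound:
  assumes good: "good_at C B t" and C: "C \<ge> 1" and X: "X \<in> I - {Z}" and Y: "Y \<in> I"
  shows "\<bar>integral {0..1} (\<lambda>\<theta>. ell X t \<theta> * w Y t \<theta>)\<bar> \<le> ln C * \<bar>B\<bar>"
proof -
  have t: "t \<in> cball 0 \<delta>" "t \<noteq> 0" using good unfolding good_at_def by auto
  have "norm (integral {0..1} (\<lambda>\<theta>. ell X t \<theta> * w Y t \<theta>)) \<le> (ln C * \<bar>B\<bar>) * (1 - 0)"
  proof (rule integral_bound)
    show "continuous_on {0..1} (\<lambda>\<theta>. ell X t \<theta> * w Y t \<theta>)"
      using ell_continuous[OF t] w_continuous[OF t Y] X by (intro continuous_intros) auto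
    fix \<theta> :: real assume th: "\<theta> \<in> {0..1}"
    have "\<bar>w Y t \<theta>\<bar> \<le> \<bar>B\<bar>"
      using abs_Im_le_cmod[of "dh Y t \<theta> / h Y t \<theta>"] good th Y unfolding w_def good_at_def by force
    moreover have "\<bar>ell X t \<theta>\<bar> \<le> ln C"
      unfolding ell_def by (rule abs_ln_le_ln_bound[OF C]) (use good X th in \<open>auto simp: good_at_def\<close>)
    ultimately show "norm (ell X t \<theta> * w Y t \<theta>) \<le> ln C * \<bar>B\<bar>"
      unfolding real_norm_def abs_mult by (intro mult_mono) (use C in auto)
  qed simp
  then show ?thesis by simp
qed

text \<open>Only ell_Z is unbounded; it contributes log|t| times the total winding of h_Y.\<close>
lemma integral_ell_w_bound:
  assumes good: "good_at C B t" and C: "C \<ge> 1" and X: "X \<in> I" and Y: "Y \<in> I"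
    and wY: "integral {0..1} (w Y t) = 2*pi*wind Y"
  shows "\<bar>integral {0..1} (\<lambda>\<theta>. ell X t \<theta> * w Y t \<theta>) - kron X Z * ln (cmod t) * (2*pi*wind Y)\<bar>
     \<le> real (card I) * (ln C * \<bar>B\<bar>)"
proof -
  have t: "t \<in> cball 0 \<delta>" "t \<noteq> 0" using good unfolding good_at_def by auto
  have lnC: "ln C * \<bar>B\<bar> \<ge> 0" using C by simp
  show ?thesis
  proof (cases "X = Z")
    case False
    have "card I \<ge> 1" using finite_I Z_in card_gt_0_iff by (metis One_nat_def Suc_leI empty_iff)
    then have "ln C * \<bar>B\<bar> \<le> real (card I) * (ln C * \<bar>B\<bar>)"
      using mult_right_mono[OF _ lnC, of 1 "real (card I)"] by simp
    moreover have "\<bar>integral {0..1} (\<lambda>\<theta>. ell X t \<theta> * w Y t \<theta>)\<bar> \<le> ln C * \<bar>B\<bar>"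
      using integral_ell_w_off_Z_bound[OF good C _ Y] X False by blast
    ultimately show ?thesis using False by (simp add: kron_def)
  next
    case True
    have intg: "(\<lambda>\<theta>. ell X' t \<theta> * w Y t \<theta>) integrable_on {0..1}" if "X' \<in> I" for X'
      by (rule integrable_continuous_real)
         (use ell_continuous[OF t that] w_continuous[OF t Y] in \<open>intro continuous_intros\<close>)
    have intw: "(\<lambda>\<theta>. ln (cmod t) * w Y t \<theta>) integrable_on {0..1}"
      using integrable_on_cmult_left[OF integrable_continuous_real[OF w_continuous[OF t Y]]] by simp
    have "integral {0..1} (\<lambda>\<theta>. ell Z t \<theta> * w Y t \<theta>)
        = integral {0..1} (\<lambda>\<theta>. ln (cmod t) * w Y t \<theta> - (\<Sum>X'\<in>I-{Z}. ell X' t \<theta> * w Y t \<theta>))"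
      by (rule integral_cong) (simp add: ell_Z_eq[OF t] left_diff_distrib sum_distrib_right)
    also have "\<dots> = ln (cmod t) * (2*pi*wind Y) - (\<Sum>X'\<in>I-{Z}. integral {0..1} (\<lambda>\<theta>. ell X' t \<theta> * w Y t \<theta>))"
    proof -
      have "integral {0..1} (\<lambda>\<theta>. \<Sum>X'\<in>I-{Z}. ell X' t \<theta> * w Y t \<theta>)
          = (\<Sum>X'\<in>I-{Z}. integral {0..1} (\<lambda>\<theta>. ell X' t \<theta> * w Y t \<theta>))"
        using intg finite_I by (intro integral_sum) auto
      moreover have "integral {0..1} (\<lambda>\<theta>. ln (cmod t) * w Y t \<theta>) = ln (cmod t) * (2*pi*wind Y)"
        using wY by simp
      moreover have "(\<lambda>\<theta>. \<Sum>X'\<in>I-{Z}. ell X' t \<theta> * w Y t \<theta>) integrable_on {0..1}"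
        using intg finite_I by (intro integrable_sum) auto
      ultimately show ?thesis using integral_diff[OF intw] by simp
    qed
    finally have "integral {0..1} (\<lambda>\<theta>. ell Z t \<theta> * w Y t \<theta>) - ln (cmod t) * (2*pi*wind Y)
        = - (\<Sum>X'\<in>I-{Z}. integral {0..1} (\<lambda>\<theta>. ell X' t \<theta> * w Y t \<theta>))" by simp
    moreover have "\<bar>\<Sum>X'\<in>I-{Z}. integral {0..1} (\<lambda>\<theta>. ell X' t \<theta> * w Y t \<theta>)\<bar> \<le> (\<Sum>X'\<in>I-{Z}. ln C * \<bar>B\<bar>)"
      by (rule order_trans[OF sum_abs sum_mono]) (use integral_ell_w_off_Z_bound[OF good C _ Y] in auto)
    moreover have "(\<Sum>X'\<in>I-{Z}. ln C * \<bar>B\<bar>) \<le> real (card I) * (ln C * \<bar>B\<bar>)"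
      using finite_I lnC card_Diff1_le[of I Z] by (simp add: mult_right_mono)
    ultimately show ?thesis using True by (simp add: kron_def)
  qed
qed

lemma integral_ell_w_asymptotics:
  "\<exists>K. \<forall>\<^sub>F t in at 0. \<forall>X\<in>I. \<forall>Y\<in>I.
     \<bar>integral {0..1} (\<lambda>\<theta>. ell X t \<theta> * w Y t \<theta>) - kron X Z * ln (cmod t) * (2*pi*wind Y)\<bar> \<le> K"
proof -
  obtain C B where C: "C \<ge> 1" and good: "\<forall>\<^sub>F t in at 0. good_at C B t"
    using logderiv_bounded unfolding good_at_def by blast
  have "\<forall>\<^sub>F t in at 0. \<forall>Y\<in>I. integral {0..1} (w Y t) = 2*pi*wind Y"
    using finite_I integral_w by (intro eventually_ball_finite) auto
  with good have "\<forall>\<^sub>F t in at 0. \<forall>X\<in>I. \<forall>Y\<in>I.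
     \<bar>integral {0..1} (\<lambda>\<theta>. ell X t \<theta> * w Y t \<theta>) - kron X Z * ln (cmod t) * (2*pi*wind Y)\<bar>
       \<le> real (card I) * (ln C * \<bar>B\<bar>)"
    by eventually_elim (use integral_ell_w_bound C in blast)
  then show ?thesis by blast
qed

lemma ln_norm_quotient:
  assumes t: "t \<in> cball 0 \<delta>" "t \<noteq> 0" and th: "\<theta> \<in> {0..1}" and E: "E \<in> I" and F: "F \<in> I"
    and k: "\<kappa> \<noteq> 0"
  shows "ln (cmod (\<kappa> * LX a b c E (\<gamma> t \<theta>) / LX a b c F (\<gamma> t \<theta>))) = ln (cmod \<kappa>) + ell E t \<theta> - ell F t \<theta>"
proof -
  have "h E t \<theta> \<noteq> 0" "h F t \<theta> \<noteq> 0" using h_nonzero[OF t th] E F by auto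
  then have "ln (cmod (\<kappa> * h E t \<theta> / h F t \<theta>)) = ln (cmod \<kappa>) + ln (cmod (h E t \<theta>)) - ln (cmod (h F t \<theta>))"
    using k by (simp add: norm_mult norm_divide ln_div ln_mult)
  then show ?thesis unfolding ell_def h_def .
qed

lemma arg_deriv_quotient:
  assumes t: "t \<in> cball 0 \<delta>" "t \<noteq> 0" and th: "\<theta> \<in> {0..1}" and E: "E \<in> I" and F: "F \<in> I"
    and k: "\<kappa> \<noteq> 0"
  shows "Im (vector_derivative (\<lambda>u. \<kappa> * LX a b c E (\<gamma> t u) / LX a b c F (\<gamma> t u)) (at \<theta> within {0..1})
            / (\<kappa> * LX a b c E (\<gamma> t \<theta>) / LX a b c F (\<gamma> t \<theta>))) = w E t \<theta> - w F t \<theta>"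
proof -
  have e: "h E t \<theta> \<noteq> 0" and f: "h F t \<theta> \<noteq> 0" using h_nonzero[OF t th] E F by auto
  have dE: "((\<lambda>u. \<kappa> * h E t u) has_vector_derivative \<kappa> * dh E t \<theta>) (at \<theta> within {0..1})"
    by (rule has_vector_derivative_mult_right[OF has_vector_derivative_at_within[OF has_vector_derivative_h[OF t th]]])
  have dF: "(h F t has_vector_derivative dh F t \<theta>) (at \<theta> within {0..1})"
    by (rule has_vector_derivative_at_within[OF has_vector_derivative_h[OF t th]])
  have "vector_derivative (\<lambda>u. \<kappa> * h E t u / h F t u) (at \<theta> within {0..1})
      = ((\<kappa> * dh E t \<theta>) * h F t \<theta> - (\<kappa> * h E t \<theta>) * dh F t \<theta>) / (h F t \<theta>)^2"
    using has_vector_derivative_divide_fun[OF dE dF f] vector_derivative_within_closed_interval[of 0 1 \<theta>] th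
    by auto
  moreover have "((\<kappa> * dh E t \<theta>) * h F t \<theta> - (\<kappa> * h E t \<theta>) * dh F t \<theta>) / (h F t \<theta>)^2 / (\<kappa> * h E t \<theta> / h F t \<theta>)
      = dh E t \<theta> / h E t \<theta> - dh F t \<theta> / h F t \<theta>"
    using e f k by (simp add: field_simps power2_eq_square)
  ultimately show ?thesis unfolding w_def h_def by simp
qed

definition wint :: "nat \<times> nat \<Rightarrow> complex \<Rightarrow> real" where
  "wint Y t = integral {0..1} (w Y t)"

definition ewint :: "nat \<times> nat \<Rightarrow> nat \<times> nat \<Rightarrow> complex \<Rightarrow> real" where
  "ewint X Y t = integral {0..1} (\<lambda>\<theta>. ell X t \<theta> * w Y t \<theta>)"

lemma pairing_expand:
  assumes t: "t \<in> cball 0 \<delta>" "t \<noteq> 0" and A: "A \<in> I" and B: "B \<in> I" and C: "C \<in> I" and D: "D \<in> I"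
    and k: "\<kappa> \<noteq> 0" and k': "\<kappa>' \<noteq> 0"
  shows "pairing (\<gamma> t) (\<lambda>p. \<kappa> * LX a b c A p / LX a b c B p, \<lambda>p. \<kappa>' * LX a b c C p / LX a b c D p) * (2*pi)
   = ln (cmod \<kappa>) * (wint C t - wint D t) - ln (cmod \<kappa>') * (wint A t - wint B t)
     + (ewint A C t - ewint A D t - ewint B C t + ewint B D t)
     - (ewint C A t - ewint C B t - ewint D A t + ewint D B t)"
proof -
  define H where "H \<theta> = ln (cmod \<kappa>) * (w C t \<theta> - w D t \<theta>) - ln (cmod \<kappa>') * (w A t \<theta> - w B t \<theta>)
     + (ell A t \<theta> * w C t \<theta> - ell A t \<theta> * w D t \<theta> - ell B t \<theta> * w C t \<theta> + ell B t \<theta> * w D t \<theta>)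
     - (ell C t \<theta> * w A t \<theta> - ell C t \<theta> * w B t \<theta> - ell D t \<theta> * w A t \<theta> + ell D t \<theta> * w B t \<theta>)" for \<theta>
  have hw: "(w Y t has_integral wint Y t) {0..1}" if "Y \<in> I" for Y
    unfolding wint_def using integrable_continuous_real[OF w_continuous[OF t that]]
    by (simp add: has_integral_integral)
  have hew: "((\<lambda>\<theta>. ell X t \<theta> * w Y t \<theta>) has_integral ewint X Y t) {0..1}" if "X \<in> I" "Y \<in> I" for X Y
  proof -
    have "continuous_on {0..1} (\<lambda>\<theta>. ell X t \<theta> * w Y t \<theta>)"
      using ell_continuous[OF t that(1)] w_continuous[OF t that(2)] by (intro continuous_intros)
    then show ?thesis unfolding ewint_def using integrable_continuous_real by (simp add: has_integral_integral)
  qed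
  define F where "F \<theta> = ln (cmod (\<kappa> * LX a b c A (\<gamma> t \<theta>) / LX a b c B (\<gamma> t \<theta>))) *
          Im (vector_derivative (\<lambda>u. \<kappa>' * LX a b c C (\<gamma> t u) / LX a b c D (\<gamma> t u)) (at \<theta> within {0..1})
             / (\<kappa>' * LX a b c C (\<gamma> t \<theta>) / LX a b c D (\<gamma> t \<theta>)))
       - ln (cmod (\<kappa>' * LX a b c C (\<gamma> t \<theta>) / LX a b c D (\<gamma> t \<theta>))) *
          Im (vector_derivative (\<lambda>u. \<kappa> * LX a b c A (\<gamma> t u) / LX a b c B (\<gamma> t u)) (at \<theta> within {0..1})
             / (\<kappa> * LX a b c A (\<gamma> t \<theta>) / LX a b c B (\<gamma> t \<theta>)))" for \<theta>
  have "(H has_integral (ln (cmod \<kappa>) * (wint C t - wint D t) - ln (cmod \<kappa>') * (wint A t - wint B t)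
     + (ewint A C t - ewint A D t - ewint B C t + ewint B D t)
     - (ewint C A t - ewint C B t - ewint D A t + ewint D B t))) {0..1}"
    unfolding H_def by (intro has_integral_add has_integral_diff has_integral_mult_right hw hew A B C D)
  moreover have "F \<theta> = H \<theta>"
    if th: "\<theta> \<in> {0..1}" for \<theta>
    unfolding ln_norm_quotient[OF t th A B k] ln_norm_quotient[OF t th C D k']
      arg_deriv_quotient[OF t th A B k] arg_deriv_quotient[OF t th C D k'] H_def F_def
    by (simp add: algebra_simps)
  ultimately have "integral {0..1} F = ln (cmod \<kappa>) * (wint C t - wint D t) - ln (cmod \<kappa>') * (wint A t - wint B t)
     + (ewint A C t - ewint A D t - ewint B C t + ewint B D t)
     - (ewint C A t - ewint C B t - ewint D A t + ewint D B t)"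
    using integral_unique integral_cong[of "{0..1}" F H] by metis
  then show ?thesis unfolding pairing_def Let_def F_def by simp
qed

lemma lead_coef_eq_winding:
  "(kron A Z - kron B Z) * (wind C - wind D) - (kron C Z - kron D Z) * (wind A - wind B)
     = lead_coef Z Z' A B C D"
  unfolding wind_def lead_coef_def by (simp add: algebra_simps)

lemma pairing_asymptotics:
  assumes A: "A \<in> I" and B: "B \<in> I" and C: "C \<in> I" and D: "D \<in> I"
    and k: "\<kappa> \<noteq> 0" and k': "\<kappa>' \<noteq> 0"
  shows "((\<lambda>t. pairing (\<gamma> t) (\<lambda>p. \<kappa> * LX a b c A p / LX a b c B p, \<lambda>p. \<kappa>' * LX a b c C p / LX a b c D p)
            / ln (cmod t)) \<longlongrightarrow> lead_coef Z Z' A B C D) (at 0)"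
proof -
  obtain K where K: "\<forall>\<^sub>F t in at 0. \<forall>X\<in>I. \<forall>Y\<in>I.
     \<bar>ewint X Y t - kron X Z * ln (cmod t) * (2*pi*wind Y)\<bar> \<le> K"
    using integral_ell_w_asymptotics unfolding ewint_def by blast
  have W: "\<forall>\<^sub>F t in at 0. \<forall>Y\<in>I. wint Y t = 2*pi*wind Y"
    using finite_I integral_w unfolding wint_def by (intro eventually_ball_finite) auto
  define c0 where "c0 = 2*pi*(ln (cmod \<kappa>) * (wind C - wind D) - ln (cmod \<kappa>') * (wind A - wind B))"
  have "\<forall>\<^sub>F t in at 0. \<bar>pairing (\<gamma> t) (\<lambda>p. \<kappa> * LX a b c A p / LX a b c B p, \<lambda>p. \<kappa>' * LX a b c C p / LX a b c D p)
      - ln (cmod t) * lead_coef Z Z' A B C D\<bar> \<le> (\<bar>c0\<bar> + 8 * K) / (2*pi)"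
    using eventually_in_disc K W
  proof eventually_elim
    case (elim t)
    let ?P = "pairing (\<gamma> t) (\<lambda>p. \<kappa> * LX a b c A p / LX a b c B p, \<lambda>p. \<kappa>' * LX a b c C p / LX a b c D p)"
    define R where "R X Y = ewint X Y t - kron X Z * ln (cmod t) * (2*pi*wind Y)" for X Y
    have R: "\<bar>R X Y\<bar> \<le> K" if "X \<in> I" "Y \<in> I" for X Y using elim that unfolding R_def by blast
    have t: "t \<in> cball 0 \<delta>" "t \<noteq> 0" using elim by auto
    have ew: "ewint X Y t = R X Y + kron X Z * ln (cmod t) * (2*pi*wind Y)" for X Y
      unfolding R_def by simp
    have w: "wint Y t = 2*pi*wind Y" if "Y \<in> I" for Y using elim that by blast
    have "?P * (2*pi) - ln (cmod t) * lead_coef Z Z' A B C D * (2*pi)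
        = c0 + (R A C - R A D - R B C + R B D) - (R C A - R C B - R D A + R D B)"
      unfolding lead_coef_eq_winding[symmetric] c0_def
      by (rule pairing_expansion_algebra)
         (use pairing_expand[OF t A B C D k k'] in \<open>simp only: ew w[OF A] w[OF B] w[OF C] w[OF D]\<close>)
    then have "\<bar>(?P - ln (cmod t) * lead_coef Z Z' A B C D) * (2*pi)\<bar> \<le> \<bar>c0\<bar> + 8 * K"
      using R[OF A C] R[OF A D] R[OF B C] R[OF B D] R[OF C A] R[OF C B] R[OF D A] R[OF D B]
      by (simp add: left_diff_distrib abs_le_iff) linarith
    then show ?case unfolding abs_mult using pi_gt_zero by (simp add: field_simps)
  qed
  then show ?thesis by (rule tendsto_div_ln_norm)
qed

end

section \<open>The loops around the points of S\<close>

definition admissible_loop :: "(nat \<Rightarrow> complex) \<Rightarrow> (nat \<Rightarrow> complex) \<Rightarrow> (nat \<Rightarrow> nat \<Rightarrow> complex)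
    \<Rightarrow> nat \<Rightarrow> (nat \<Rightarrow> nat) \<Rightarrow> complex \<Rightarrow> complex \<Rightarrow> real \<Rightarrow> nat \<times> nat \<times> nat \<times> nat
    \<Rightarrow> real \<Rightarrow> (complex \<Rightarrow> real \<Rightarrow> pt) \<Rightarrow> bool" where
  "admissible_loop a b c N Nn pr qr \<delta> s \<rho> \<Gamma> \<longleftrightarrow> (case s of (i,j,k,l) \<Rightarrow>
      \<rho> > 0
    \<and> (\<forall>Q\<in>all_pts a b c N Nn. Q \<noteq> Pt a b c i j k l \<longrightarrow>
         cmod (xcoord pr qr Q - xcoord pr qr (Pt a b c i j k l)) > \<rho>)
    \<and> continuous_on (cball 0 \<delta> \<times> {0..1}) (\<lambda>(t,\<theta>). \<Gamma> t \<theta>)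
    \<and> (\<forall>t\<in>cball 0 \<delta>. \<forall>\<theta>\<in>{0..1}.
         xcoord pr qr (\<Gamma> t \<theta>) = xcoord pr qr (Pt a b c i j k l) + complex_of_real \<rho> * cis (2 * pi * \<theta>)
       \<and> Fprod a b c N Nn (\<Gamma> t \<theta>) = t)
    \<and> (\<forall>t\<in>cball 0 \<delta>. \<Gamma> t 0 = \<Gamma> t 1)
    \<and> (\<forall>t\<in>cball 0 \<delta> - {0}. (\<Gamma> t) C1_differentiable_on {0..1})
    \<and> ((\<forall>\<theta>\<in>{0..1}. Lf a b c i j (\<Gamma> 0 \<theta>) = 0) \<or> (\<forall>\<theta>\<in>{0..1}. Lf a b c k l (\<Gamma> 0 \<theta>) = 0)))"

text \<open>Every line X other than Z and Z' satisfies the condition far_lines of the locale: a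
  line of the group of Z is parallel to Z and misses P (distinct lines), and a line of another
  group meets Z in an intersection point Q /= P (no three lines are concurrent), whose
  pi-coordinate lies outside the circle.\<close>
lemma far_lines_condition:
  fixes N :: nat and Nn :: "nat \<Rightarrow> nat" and a b :: "nat \<Rightarrow> complex" and c :: "nat \<Rightarrow> nat \<Rightarrow> complex"
  assumes distinct_lines: "\<forall>i\<in>{1..N}. \<forall>j\<in>{1..Nn i}. \<forall>k\<in>{1..Nn i}. j \<noteq> k \<longrightarrow> c i j \<noteq> c i k"
    and bracket: "\<forall>i\<in>{1..N}. \<forall>k\<in>{1..N}. i \<noteq> k \<longrightarrow> br a b i k \<noteq> 0"
    and no_triple: "\<forall>i1\<in>{1..N}. \<forall>j1\<in>{1..Nn i1}. \<forall>i2\<in>{1..N}. \<forall>j2\<in>{1..Nn i2}.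
        \<forall>i3\<in>{1..N}. \<forall>j3\<in>{1..Nn i3}.
        (i1,j1) \<noteq> (i2,j2) \<and> (i1,j1) \<noteq> (i3,j3) \<and> (i2,j2) \<noteq> (i3,j3) \<longrightarrow>
        \<not> (\<exists>p. Lf a b c i1 j1 p = 0 \<and> Lf a b c i2 j2 p = 0 \<and> Lf a b c i3 j3 p = 0)"
    and Z: "(i1,j1) \<in> Sigma {1..N} (\<lambda>i. {1..Nn i})" and Z': "(i2,j2) \<in> Sigma {1..N} (\<lambda>i. {1..Nn i})"
    and groups: "i1 \<noteq> i2"
    and P_on_Z: "Lf a b c i1 j1 P = 0" and P_on_Z': "Lf a b c i2 j2 P = 0"
    and pi_nonconst: "a i1 * qr - b i1 * pr \<noteq> 0"
    and outside: "\<forall>Q\<in>all_pts a b c N Nn. Q \<noteq> P \<longrightarrow> cmod (xcoord pr qr Q - xcoord pr qr P) > r"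
    and X: "X \<in> Sigma {1..N} (\<lambda>i. {1..Nn i}) - {(i1,j1),(i2,j2)}"
  shows "(lam_coef a b pr qr (i1,j1) X = 0 \<and> LX a b c X P \<noteq> 0)
     \<or> (lam_coef a b pr qr (i1,j1) X \<noteq> 0 \<and> r < cmod (LX a b c X P / lam_coef a b pr qr (i1,j1) X))"
proof -
  obtain i' j' where Xe: "X = (i',j')" by (cases X)
  have i': "i' \<in> {1..N}" and j': "j' \<in> {1..Nn i'}" using X Xe by auto
  define lm where "lm = lam_coef a b pr qr (i1,j1) X"
  show ?thesis
  proof (cases "i' = i1")
    case True
    have "LX a b c X P = c i' j' - c i1 j1"
      using P_on_Z True Xe by (simp add: LX_def Lf_def eq_neg_iff_add_eq_0)
    then have "LX a b c X P \<noteq> 0" using distinct_lines Z j' X Xe True by auto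
    moreover have "lm = 0" unfolding lm_def lam_coef_def br_def using True Xe by simp
    ultimately show ?thesis unfolding lm_def by simp
  next
    case False
    have br: "br a b i1 i' \<noteq> 0" using bracket Z i' False by auto
    then have lm0: "lm \<noteq> 0" unfolding lm_def lam_coef_def using pi_nonconst Xe by simp
    define Q where "Q = Pt a b c i1 j1 i' j'"
    have QZ: "Lf a b c i1 j1 Q = 0" and QX: "Lf a b c i' j' Q = 0"
      unfolding Q_def using Pt_on_lines[OF br] by auto
    have Qin: "Q \<in> all_pts a b c N Nn" unfolding Q_def all_pts_def using Z i' j' False by blast
    have QP: "Q \<noteq> P"
    proof
      assume "Q = P"
      then have "Lf a b c i' j' P = 0" using QX by simp
      moreover have "(i1,j1) \<noteq> (i2,j2)" "(i1,j1) \<noteq> (i',j')" "(i2,j2) \<noteq> (i',j')" using X Xe groups by auto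
      ultimately show False using no_triple Z Z' i' j' P_on_Z P_on_Z' by blast
    qed
    have "LX a b c X P - lm * xcoord pr qr P = LX a b c X Q - lm * xcoord pr qr Q"
      using LX_decomp_const[where a=a and b=b and pr=pr and qr=qr and Z="(i1,j1)" and X=X and p=P
          and q=Q and c=c] pi_nonconst P_on_Z QZ
      unfolding lm_def by (simp add: LX_def)
    then have "LX a b c X P / lm = xcoord pr qr P - xcoord pr qr Q"
      using QX Xe lm0 by (simp add: LX_def field_simps)
    moreover have "r < cmod (xcoord pr qr Q - xcoord pr qr P)" using outside Qin QP by auto
    ultimately show ?thesis using lm0 unfolding lm_def by (simp add: norm_minus_commute)
  qed
qed

lemma loop_at_point_of_admissible:
  fixes N :: nat and Nn :: "nat \<Rightarrow> nat" and a b :: "nat \<Rightarrow> complex" and c :: "nat \<Rightarrow> nat \<Rightarrow> complex"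
    and \<Gamma> :: "complex \<Rightarrow> real \<Rightarrow> pt"
  assumes distinct_lines: "\<forall>i\<in>{1..N}. \<forall>j\<in>{1..Nn i}. \<forall>k\<in>{1..Nn i}. j \<noteq> k \<longrightarrow> c i j \<noteq> c i k"
    and bracket: "\<forall>i\<in>{1..N}. \<forall>k\<in>{1..N}. i \<noteq> k \<longrightarrow> br a b i k \<noteq> 0"
    and no_triple: "\<forall>i1\<in>{1..N}. \<forall>j1\<in>{1..Nn i1}. \<forall>i2\<in>{1..N}. \<forall>j2\<in>{1..Nn i2}.
        \<forall>i3\<in>{1..N}. \<forall>j3\<in>{1..Nn i3}.
        (i1,j1) \<noteq> (i2,j2) \<and> (i1,j1) \<noteq> (i3,j3) \<and> (i2,j2) \<noteq> (i3,j3) \<longrightarrow>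
        \<not> (\<exists>p. Lf a b c i1 j1 p = 0 \<and> Lf a b c i2 j2 p = 0 \<and> Lf a b c i3 j3 p = 0)"
    and unramified: "\<forall>i\<in>{1..N}. pr * b i - qr * a i \<noteq> 0"
    and Z: "(i1,j1) \<in> Sigma {1..N} (\<lambda>i. {1..Nn i})" and Z': "(i2,j2) \<in> Sigma {1..N} (\<lambda>i. {1..Nn i})"
    and groups: "i1 \<noteq> i2"
    and P_on_Z: "Lf a b c i1 j1 P = 0" and P_on_Z': "Lf a b c i2 j2 P = 0"
    and outside: "\<forall>Q\<in>all_pts a b c N Nn. Q \<noteq> P \<longrightarrow> cmod (xcoord pr qr Q - xcoord pr qr P) > r"
    and r_pos: "r > 0" and delta_pos: "\<delta> > 0"
    and cont: "continuous_on (cball 0 \<delta> \<times> {0..1}) (\<lambda>(t,\<theta>). \<Gamma> t \<theta>)"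
    and circle_fibre: "\<forall>t\<in>cball 0 \<delta>. \<forall>\<theta>\<in>{0..1}.
              xcoord pr qr (\<Gamma> t \<theta>) = xcoord pr qr P + complex_of_real r * cis (2 * pi * \<theta>)
            \<and> Fprod a b c N Nn (\<Gamma> t \<theta>) = t"
    and closed: "\<forall>t\<in>cball 0 \<delta>. \<Gamma> t 0 = \<Gamma> t 1"
    and smooth: "\<forall>t\<in>cball 0 \<delta> - {0}. (\<Gamma> t) C1_differentiable_on {0..1}"
    and on_Z: "\<forall>\<theta>\<in>{0..1}. Lf a b c i1 j1 (\<Gamma> 0 \<theta>) = 0"
  shows "loop_at_point a b c (Sigma {1..N} (\<lambda>i. {1..Nn i})) pr qr r \<delta> \<Gamma> (i1,j1) (i2,j2) P"
proof
  have "pr * b i1 - qr * a i1 \<noteq> 0" using unramified Z by blast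
  then show pi_nonconst: "a (fst (i1,j1)) * qr - b (fst (i1,j1)) * pr \<noteq> 0" by (simp add: algebra_simps)
  show "lam_coef a b pr qr (i1,j1) (i2,j2) \<noteq> 0"
    unfolding lam_coef_def using bracket Z Z' groups pi_nonconst by simp
  show "\<forall>X\<in>Sigma {1..N} (\<lambda>i. {1..Nn i}) - {(i1,j1),(i2,j2)}.
     (lam_coef a b pr qr (i1,j1) X = 0 \<and> LX a b c X P \<noteq> 0)
     \<or> (lam_coef a b pr qr (i1,j1) X \<noteq> 0 \<and> r < cmod (LX a b c X P / lam_coef a b pr qr (i1,j1) X))"
    using far_lines_condition[OF distinct_lines bracket no_triple Z Z' groups P_on_Z P_on_Z' _ outside]
      pi_nonconst by simp
qed (use Z Z' groups r_pos delta_pos cont circle_fibre closed smooth on_Z P_on_Z P_on_Z'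
      in \<open>auto simp: LX_def Fprod_eq_prod_LX\<close>)

section \<open>The elements alpha and the matrix of leading coefficients\<close>

text \<open>Each alpha is a symbol {k1 L_A/L_B, k2 L_C/L_D}; these functions give its lines
  A = num1, B = den1, C = num2, D = den2 and its constants k1, k2.\<close>
fun num1 :: "atag \<Rightarrow> nat \<times> nat" where
  "num1 (RT j m) = (1,1)" | "num1 (TT i j k l m n) = (k,l)"
fun den1 :: "atag \<Rightarrow> nat \<times> nat" where
  "den1 (RT j m) = (1,j)" | "den1 (TT i j k l m n) = (i,j)"
fun num2 :: "atag \<Rightarrow> nat \<times> nat" where
  "num2 (RT j m) = (2,1)" | "num2 (TT i j k l m n) = (m,n)"
fun den2 :: "atag \<Rightarrow> nat \<times> nat" where
  "den2 (RT j m) = (2,m)" | "den2 (TT i j k l m n) = (i,j)"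

fun const1 :: "(nat \<Rightarrow> complex) \<Rightarrow> (nat \<Rightarrow> complex) \<Rightarrow> atag \<Rightarrow> complex" where
  "const1 a b (RT j m) = 1" | "const1 a b (TT i j k l m n) = br a b i m / br a b k m"
fun const2 :: "(nat \<Rightarrow> complex) \<Rightarrow> (nat \<Rightarrow> complex) \<Rightarrow> atag \<Rightarrow> complex" where
  "const2 a b (RT j m) = 1" | "const2 a b (TT i j k l m n) = br a b i k / br a b m k"

lemma alpha_of_eq:
  "alpha_of a b c tg = (\<lambda>p. const1 a b tg * LX a b c (num1 tg) p / LX a b c (den1 tg) p,
                         \<lambda>p. const2 a b tg * LX a b c (num2 tg) p / LX a b c (den2 tg) p)"
  by (cases tg) (auto simp: Rsym_def Tsym_def LX_def)

lemma const_nonzero: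
  assumes "tg \<in> alpha_tags N Nn" "\<forall>i\<in>{1..N}. \<forall>k\<in>{1..N}. i \<noteq> k \<longrightarrow> br a b i k \<noteq> 0"
  shows "const1 a b tg \<noteq> 0" "const2 a b tg \<noteq> 0"
  using assms unfolding alpha_tags_def by auto

lemma tag_lines:
  assumes "tg \<in> alpha_tags N Nn" "2 \<le> N" "\<forall>i\<in>{1..N}. Nn i \<ge> 1"
  shows "num1 tg \<in> Sigma {1..N} (\<lambda>i. {1..Nn i})" "den1 tg \<in> Sigma {1..N} (\<lambda>i. {1..Nn i})"
        "num2 tg \<in> Sigma {1..N} (\<lambda>i. {1..Nn i})" "den2 tg \<in> Sigma {1..N} (\<lambda>i. {1..Nn i})"
  using assms unfolding alpha_tags_def by auto

text \<open>The leading coefficient of the pairing of alpha with the loop around s = (i,j,k,l) that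
  starts on the line (i,j).\<close>
fun lead_entry :: "nat \<times> nat \<times> nat \<times> nat \<Rightarrow> atag \<Rightarrow> real" where
  "lead_entry (i,j,k,l) tg = lead_coef (i,j) (k,l) (num1 tg) (den1 tg) (num2 tg) (den2 tg)"

fun tag_point :: "atag \<Rightarrow> nat \<times> nat \<times> nat \<times> nat" where
  "tag_point (RT j m) = (1,j,2,m)"
| "tag_point (TT i j k l m n) = (if j = 1 then (k,l,m,n) else (1,j,m,n))"

lemma tag_point_bij:
  assumes "2 \<le> N" "\<forall>i\<in>{1..N}. Nn i \<ge> 1"
  shows "bij_betw tag_point (alpha_tags N Nn) (S_idx N Nn)"
proof -
  have "tag_point ` alpha_tags N Nn \<subseteq> S_idx N Nn"
    using assms(1) unfolding alpha_tags_def S_idx_def by auto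
  moreover have "s \<in> tag_point ` alpha_tags N Nn" if s: "s \<in> S_idx N Nn" for s
  proof -
    obtain i j k l where s_eq: "s = (i,j,k,l)" by (cases s) auto
    have H: "1 \<le> i" "i < k" "k \<le> N" "1 \<le> j" "j \<le> Nn i" "1 \<le> l" "l \<le> Nn k" "(i,j) \<noteq> (1,1)"
      "(i,k,l) \<noteq> (1,2,1)"
      using s unfolding s_eq S_idx_def by auto
    consider (R) "i = 1" "k = 2" | (T2) "i = 1" "k \<noteq> 2" | (T1) "i \<noteq> 1" by blast
    then show ?thesis
    proof cases
      case R
      have "RT j l \<in> alpha_tags N Nn" using H[unfolded R] R by (auto simp: alpha_tags_def)
      then show ?thesis using R s_eq by force
    next
      case T2
      show ?thesis using T2 H s_eq by (intro image_eqI[of _ _ "TT 1 j 2 1 k l"]) (auto simp: alpha_tags_def)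
    next
      case T1
      show ?thesis using T1 H s_eq by (intro image_eqI[of _ _ "TT 1 1 i j k l"]) (auto simp: alpha_tags_def)
    qed
  qed
  moreover have "inj_on tag_point (alpha_tags N Nn)"
    unfolding alpha_tags_def inj_on_def by auto
  ultimately show ?thesis unfolding bij_betw_def by blast
qed

text \<open>The leading coefficients vanish off the matching, except for a point s of S with first
  group 2 paired with an alpha matched to a point of first group 1: after ordering by the first
  group, the matrix is block triangular.\<close>
lemma lead_entry_support:
  assumes "s \<in> S_idx N Nn" "tg \<in> alpha_tags N Nn" "lead_entry s tg \<noteq> 0"
  shows "s = tag_point tg \<or> (fst s = 2 \<and> fst (tag_point tg) = 1)"
  using assms unfolding S_idx_def alpha_tags_def
  by (auto simp: lead_coef_def kron_def split: if_splits)

lemma lead_entry_matched: "tg \<in> alpha_tags N Nn \<Longrightarrow> \<bar>lead_entry (tag_point tg) tg\<bar> = 1"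
  unfolding alpha_tags_def by (auto simp: lead_coef_def kron_def)

lemma lead_matrix_unique_permutation:
  fixes E :: "nat \<Rightarrow> nat \<Rightarrow> real"
  assumes es: "bij_betw es {..<g} (S_idx N Nn)" and ea: "bij_betw ea {..<g} (alpha_tags N Nn)"
    and E: "\<And>u v. u < g \<Longrightarrow> v < g \<Longrightarrow> \<bar>E u v\<bar> = \<bar>lead_entry (es u) (ea v)\<bar>"
    and \<phi>: "inj_on \<phi> {..<g}" "\<phi> ` {..<g} = S_idx N Nn" "\<And>v. v < g \<Longrightarrow> \<phi> v = tag_point (ea v)"
    and p: "p permutes {..<g}" and nz: "(\<Prod>u<g. E u (p u)) \<noteq> 0"
  shows "u < g \<Longrightarrow> es u = \<phi> (p u)"
proof -
  have pg: "p u < g" if "u < g" for u using permutes_in_image[OF p] that by simp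
  have esS: "es u \<in> S_idx N Nn" if "u < g" for u using es that by (auto simp: bij_betw_def)
  have eaA: "ea v \<in> alpha_tags N Nn" if "v < g" for v using ea that by (auto simp: bij_betw_def)
  have support: "es u = \<phi> (p u) \<or> (fst (es u) = 2 \<and> fst (\<phi> (p u)) = 1)" if u: "u < g" for u
  proof -
    have "E u (p u) \<noteq> 0" using nz u by (auto simp: prod_zero_iff)
    then have "lead_entry (es u) (ea (p u)) \<noteq> 0" using E[OF u pg[OF u]] by auto
    then show ?thesis using lead_entry_support[OF esS[OF u] eaA[OF pg[OF u]]] \<phi>(3)[OF pg[OF u]] by simp
  qed
  assume u: "u < g"
  show "es u = \<phi> (p u)"
  proof (rule ccontr)
    assume ne: "es u \<noteq> \<phi> (p u)"
    then have grp: "fst (es u) = 2" "fst (\<phi> (p u)) = 1" using support[OF u] by auto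
    have "\<phi> (p u) \<in> es ` {..<g}" using es \<phi>(2) pg[OF u] by (auto simp: bij_betw_def)
    then obtain u' where u': "u' < g" "es u' = \<phi> (p u)" by auto
    then have "es u' = \<phi> (p u')" using support[OF u'(1)] grp by auto
    then have "p u' = p u" using \<phi>(1) pg u u' by (auto simp: inj_on_def)
    then have "u' = u" using permutes_inj[OF p] by (auto simp: inj_def)
    then show False using ne u' by simp
  qed
qed

lemma lead_matrix_det_unit:
  fixes E :: "nat \<Rightarrow> nat \<Rightarrow> real"
  assumes N2: "2 \<le> N" and Nn1: "\<forall>i\<in>{1..N}. Nn i \<ge> 1"
    and es: "bij_betw es {..<g} (S_idx N Nn)" and ea: "bij_betw ea {..<g} (alpha_tags N Nn)"
    and E: "\<And>u v. u < g \<Longrightarrow> v < g \<Longrightarrow> \<bar>E u v\<bar> = \<bar>lead_entry (es u) (ea v)\<bar>"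
  shows "\<bar>Determinant.det (mat g g (\<lambda>(u,v). E u v))\<bar> = 1"
proof -
  define \<phi> where "\<phi> = tag_point \<circ> ea"
  have \<phi>: "bij_betw \<phi> {..<g} (S_idx N Nn)" unfolding \<phi>_def
    by (rule bij_betw_trans[OF ea tag_point_bij[OF N2 Nn1]])
  text \<open>The matching, as a permutation of the row indices.\<close>
  define f where "f u = (if u < g then inv_into {..<g} \<phi> (es u) else u)" for u
  have "bij_betw (inv_into {..<g} \<phi> \<circ> es) {..<g} {..<g}"
    by (rule bij_betw_trans[OF es bij_betw_inv_into[OF \<phi>]])
  then have "bij_betw f {..<g} {..<g}" by (rule bij_betw_cong[THEN iffD1, rotated]) (auto simp: f_def)
  then have f: "f permutes {..<g}" by (rule bij_imp_permutes) (auto simp: f_def)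
  have f_match: "\<phi> (f u) = es u" if "u < g" for u
  proof -
    have "es u \<in> S_idx N Nn" using es that by (auto simp: bij_betw_def)
    then show ?thesis using that bij_betw_inv_into_right[OF \<phi>] unfolding f_def by simp
  qed
  have "p = f" if p: "p permutes {..<g}" and nz: "(\<Prod>u<g. E u (p u)) \<noteq> 0" for p
  proof
    fix u show "p u = f u"
    proof (cases "u < g")
      case True
      have "es u = \<phi> (p u)"
        by (rule lead_matrix_unique_permutation[OF es ea E _ _ _ p nz True])
           (use \<phi> in \<open>auto simp: bij_betw_def\<close>, simp add: \<phi>_def)
      then show ?thesis
        using True bij_betw_inv_into_left[OF \<phi>] permutes_in_image[OF p] unfolding f_def by simp
    qed (use permutes_not_in[OF p] f_def in simp)
  qed
  then have "Determinant.det (mat g g (\<lambda>(u,v). E u v)) = signof f * (\<Prod>u<g. E u (f u))"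
    by (rule det_single_permutation[OF f])
  moreover have "\<bar>E u (f u)\<bar> = 1" if "u < g" for u
  proof -
    have "f u < g" using permutes_in_image[OF f] that by simp
    then show ?thesis
      using E[OF that] f_match[OF that] lead_entry_matched ea unfolding \<phi>_def
      by (metis bij_betwE comp_apply lessThan_iff)
  qed
  ultimately show ?thesis by (simp add: abs_mult abs_prod sign_def)
qed

lemma pairing_alpha_asymptotics:
  assumes loop: "loop_at_point a b c (Sigma {1..N} (\<lambda>i. {1..Nn i})) pr qr r \<delta> \<Gamma> Z Z' P"
    and tg: "tg \<in> alpha_tags N Nn" and N2: "2 \<le> N" and Nn1: "\<forall>i\<in>{1..N}. Nn i \<ge> 1"
    and bracket: "\<forall>i\<in>{1..N}. \<forall>k\<in>{1..N}. i \<noteq> k \<longrightarrow> br a b i k \<noteq> 0"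
  shows "((\<lambda>t. pairing (\<Gamma> t) (alpha_of a b c tg) / ln (cmod t))
           \<longlongrightarrow> lead_coef Z Z' (num1 tg) (den1 tg) (num2 tg) (den2 tg)) (at 0)"
  unfolding alpha_of_eq
  by (rule loop_at_point.pairing_asymptotics[OF loop tag_lines[OF tg N2 Nn1] const_nonzero[OF tg bracket]])

text \<open>Each entry of the regulator matrix, divided by log|t|, converges to a limit of the modulus
  of the corresponding leading coefficient; the sign depends on which of the two lines through
  s contains the loop at t = 0.\<close>
lemma entry_asymptotics:
  fixes N :: nat and Nn :: "nat \<Rightarrow> nat" and a b :: "nat \<Rightarrow> complex" and c :: "nat \<Rightarrow> nat \<Rightarrow> complex"
  assumes N2: "N \<ge> 2" and Nn1: "\<forall>i\<in>{1..N}. Nn i \<ge> 1"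
    and distinct_lines: "\<forall>i\<in>{1..N}. \<forall>j\<in>{1..Nn i}. \<forall>k\<in>{1..Nn i}. j \<noteq> k \<longrightarrow> c i j \<noteq> c i k"
    and bracket: "\<forall>i\<in>{1..N}. \<forall>k\<in>{1..N}. i \<noteq> k \<longrightarrow> br a b i k \<noteq> 0"
    and no_triple: "\<forall>i1\<in>{1..N}. \<forall>j1\<in>{1..Nn i1}. \<forall>i2\<in>{1..N}. \<forall>j2\<in>{1..Nn i2}.
        \<forall>i3\<in>{1..N}. \<forall>j3\<in>{1..Nn i3}.
        (i1,j1) \<noteq> (i2,j2) \<and> (i1,j1) \<noteq> (i3,j3) \<and> (i2,j2) \<noteq> (i3,j3) \<longrightarrow>
        \<not> (\<exists>p. Lf a b c i1 j1 p = 0 \<and> Lf a b c i2 j2 p = 0 \<and> Lf a b c i3 j3 p = 0)"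
    and unramified: "\<forall>i\<in>{1..N}. pr * b i - qr * a i \<noteq> 0" and delta_pos: "\<delta> > 0"
    and s: "s \<in> S_idx N Nn" and loop: "admissible_loop a b c N Nn pr qr \<delta> s \<rho> \<Gamma>"
    and tg: "tg \<in> alpha_tags N Nn"
  shows "\<exists>E. ((\<lambda>t. pairing (\<Gamma> t) (alpha_of a b c tg) / ln (cmod t)) \<longlongrightarrow> E) (at 0)
             \<and> \<bar>E\<bar> = \<bar>lead_entry s tg\<bar>"
proof -
  obtain i j k l where s_eq: "s = (i,j,k,l)" by (cases s) auto
  have lines: "(i,j) \<in> Sigma {1..N} (\<lambda>i. {1..Nn i})" "(k,l) \<in> Sigma {1..N} (\<lambda>i. {1..Nn i})" "i \<noteq> k"
    using s unfolding s_eq S_idx_def by auto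
  define P where "P = Pt a b c i j k l"
  have "br a b i k \<noteq> 0" using bracket lines by auto
  then have P_on: "Lf a b c i j P = 0" "Lf a b c k l P = 0" unfolding P_def using Pt_on_lines by auto
  from loop[unfolded admissible_loop_def s_eq prod.case, folded P_def]
  have r_pos: "\<rho> > 0"
    and outside: "\<forall>Q\<in>all_pts a b c N Nn. Q \<noteq> P \<longrightarrow> cmod (xcoord pr qr Q - xcoord pr qr P) > \<rho>"
    and cont: "continuous_on (cball 0 \<delta> \<times> {0..1}) (\<lambda>(t,\<theta>). \<Gamma> t \<theta>)"
    and circle_fibre: "\<forall>t\<in>cball 0 \<delta>. \<forall>\<theta>\<in>{0..1}.
         xcoord pr qr (\<Gamma> t \<theta>) = xcoord pr qr P + complex_of_real \<rho> * cis (2 * pi * \<theta>)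
       \<and> Fprod a b c N Nn (\<Gamma> t \<theta>) = t"
    and closed: "\<forall>t\<in>cball 0 \<delta>. \<Gamma> t 0 = \<Gamma> t 1"
    and smooth: "\<forall>t\<in>cball 0 \<delta> - {0}. (\<Gamma> t) C1_differentiable_on {0..1}"
    and start: "(\<forall>\<theta>\<in>{0..1}. Lf a b c i j (\<Gamma> 0 \<theta>) = 0) \<or> (\<forall>\<theta>\<in>{0..1}. Lf a b c k l (\<Gamma> 0 \<theta>) = 0)"
    by blast+
  note setting = loop_at_point_of_admissible[OF distinct_lines bracket no_triple unramified
      _ _ _ _ _ outside r_pos delta_pos cont circle_fibre closed smooth]
  from start show ?thesis
  proof
    assume "\<forall>\<theta>\<in>{0..1}. Lf a b c i j (\<Gamma> 0 \<theta>) = 0"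
    from pairing_alpha_asymptotics[OF setting[OF lines P_on this] tg N2 Nn1 bracket]
    show ?thesis unfolding s_eq by auto
  next
    assume "\<forall>\<theta>\<in>{0..1}. Lf a b c k l (\<Gamma> 0 \<theta>) = 0"
    from pairing_alpha_asymptotics[OF setting[OF lines(2,1) lines(3)[symmetric] P_on(2,1) this] tg N2 Nn1 bracket]
    show ?thesis unfolding s_eq by (auto simp: lead_coef_swap[of "(k,l)" "(i,j)"])
  qed
qed

lemma regulator_det_limit:
  fixes N :: nat and Nn :: "nat \<Rightarrow> nat" and a b :: "nat \<Rightarrow> complex" and c :: "nat \<Rightarrow> nat \<Rightarrow> complex"
  assumes N2: "N \<ge> 2" and Nn1: "\<forall>i\<in>{1..N}. Nn i \<ge> 1"
    and distinct_lines: "\<forall>i\<in>{1..N}. \<forall>j\<in>{1..Nn i}. \<forall>k\<in>{1..Nn i}. j \<noteq> k \<longrightarrow> c i j \<noteq> c i k"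
    and bracket: "\<forall>i\<in>{1..N}. \<forall>k\<in>{1..N}. i \<noteq> k \<longrightarrow> br a b i k \<noteq> 0"
    and no_triple: "\<forall>i1\<in>{1..N}. \<forall>j1\<in>{1..Nn i1}. \<forall>i2\<in>{1..N}. \<forall>j2\<in>{1..Nn i2}.
        \<forall>i3\<in>{1..N}. \<forall>j3\<in>{1..Nn i3}.
        (i1,j1) \<noteq> (i2,j2) \<and> (i1,j1) \<noteq> (i3,j3) \<and> (i2,j2) \<noteq> (i3,j3) \<longrightarrow>
        \<not> (\<exists>p. Lf a b c i1 j1 p = 0 \<and> Lf a b c i2 j2 p = 0 \<and> Lf a b c i3 j3 p = 0)"
    and unramified: "\<forall>i\<in>{1..N}. pr * b i - qr * a i \<noteq> 0" and delta_pos: "\<delta> > 0"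
    and loops: "\<forall>s\<in>S_idx N Nn. admissible_loop a b c N Nn pr qr \<delta> s (r s) (\<Gamma> s)"
    and es: "bij_betw es {..<g} (S_idx N Nn)" and ea: "bij_betw ea {..<g} (alpha_tags N Nn)"
  shows "((\<lambda>t. Determinant.det (mat g g (\<lambda>(u,v). pairing (\<Gamma> (es u) t) (alpha_of a b c (ea v))))
            / (ln (cmod t)) ^ g) \<longlongrightarrow> 1) (at 0)
       \<or> ((\<lambda>t. Determinant.det (mat g g (\<lambda>(u,v). pairing (\<Gamma> (es u) t) (alpha_of a b c (ea v))))
            / (ln (cmod t)) ^ g) \<longlongrightarrow> -1) (at 0)"
proof -
  define lim where "lim u v E \<longleftrightarrow> ((\<lambda>t. pairing (\<Gamma> (es u) t) (alpha_of a b c (ea v)) / ln (cmod t)) \<longlongrightarrow> E) (at 0)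
      \<and> \<bar>E\<bar> = \<bar>lead_entry (es u) (ea v)\<bar>" for u v E
  define Ent where "Ent u v = (SOME E. lim u v E)" for u v
  have Ent: "lim u v (Ent u v)" if "u < g" "v < g" for u v
  proof -
    have "es u \<in> S_idx N Nn" "ea v \<in> alpha_tags N Nn" using es ea that unfolding bij_betw_def by auto
    from entry_asymptotics[OF N2 Nn1 distinct_lines bracket no_triple unramified delta_pos
        this(1) bspec[OF loops this(1)] this(2)]
    show ?thesis unfolding Ent_def lim_def by (rule someI_ex)
  qed
  have "((\<lambda>t. Determinant.det (mat g g (\<lambda>(u,v). pairing (\<Gamma> (es u) t) (alpha_of a b c (ea v))))
      / (ln (cmod t)) ^ g) \<longlongrightarrow> Determinant.det (mat g g (\<lambda>(u,v). Ent u v))) (at 0)"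
    by (rule det_tendsto_div_ln_power) (use Ent in \<open>simp add: lim_def\<close>)
  moreover have "\<bar>Determinant.det (mat g g (\<lambda>(u,v). Ent u v))\<bar> = 1"
    by (rule lead_matrix_det_unit[OF N2 Nn1 es ea]) (use Ent in \<open>simp add: lim_def\<close>)
  then have "Determinant.det (mat g g (\<lambda>(u,v). Ent u v)) = 1
      \<or> Determinant.det (mat g g (\<lambda>(u,v). Ent u v)) = -1"
    by (auto simp: abs_if split: if_splits)
  ultimately show ?thesis by auto
qed

theorem theorem6p4:
  fixes N :: nat and Nn :: "nat \<Rightarrow> nat"
    and a b :: "nat \<Rightarrow> complex" and c :: "nat \<Rightarrow> nat \<Rightarrow> complex"
  assumes N2: "N \<ge> 2"
    and Nn1: "\<forall>i\<in>{1..N}. Nn i \<ge> 1"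
    and nonconst: "\<forall>i\<in>{1..N}. a i \<noteq> 0 \<or> b i \<noteq> 0"
    and distinct_lines: "\<forall>i\<in>{1..N}. \<forall>j\<in>{1..Nn i}. \<forall>k\<in>{1..Nn i}. j \<noteq> k \<longrightarrow> c i j \<noteq> c i k"
    and bracket: "\<forall>i\<in>{1..N}. \<forall>k\<in>{1..N}. i \<noteq> k \<longrightarrow> br a b i k \<noteq> 0"
    and no_triple: "\<forall>i1\<in>{1..N}. \<forall>j1\<in>{1..Nn i1}. \<forall>i2\<in>{1..N}. \<forall>j2\<in>{1..Nn i2}.
        \<forall>i3\<in>{1..N}. \<forall>j3\<in>{1..Nn i3}.
        (i1,j1) \<noteq> (i2,j2) \<and> (i1,j1) \<noteq> (i3,j3) \<and> (i2,j2) \<noteq> (i3,j3) \<longrightarrow>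
        \<not> (\<exists>p. Lf a b c i1 j1 p = 0 \<and> Lf a b c i2 j2 p = 0 \<and> Lf a b c i3 j3 p = 0)"
  shows
    "\<forall>(pr::complex) (qr::complex) (r :: nat \<times> nat \<times> nat \<times> nat \<Rightarrow> real) (\<delta>::real)
        (\<Gamma> :: nat \<times> nat \<times> nat \<times> nat \<Rightarrow> complex \<Rightarrow> real \<Rightarrow> pt)
        (es :: nat \<Rightarrow> nat \<times> nat \<times> nat \<times> nat) (ea :: nat \<Rightarrow> atag).
      let \<pi> = (\<lambda>p::pt. pr * fst p + qr * snd p) in
      ( \<comment> \<open>new x-coordinate pi: unramified on X_0 away from intersection points, i.e.
           nonconstant on each line\<close>
        (\<forall>i\<in>{1..N}. pr * b i - qr * a i \<noteq> 0)
        \<comment> \<open>distinct intersection points have distinct x-coordinates\<close>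
      \<and> (\<forall>P\<in>all_pts a b c N Nn. \<forall>Q\<in>all_pts a b c N Nn. P \<noteq> Q \<longrightarrow> \<pi> P \<noteq> \<pi> Q)
      \<and> \<delta> > 0
      \<and> (\<forall>s\<in>S_idx N Nn. case s of (i,j,k,l) \<Rightarrow>
           \<comment> \<open>small circle gamma' around pi(s)\<close>
           r s > 0
         \<and> (\<forall>Q\<in>all_pts a b c N Nn. Q \<noteq> Pt a b c i j k l \<longrightarrow>
              cmod (\<pi> Q - \<pi> (Pt a b c i j k l)) > r s)
           \<comment> \<open>Gamma s t is a lift of gamma' into X_t, continuous in (t, theta)\<close>
         \<and> continuous_on (cball 0 \<delta> \<times> {0..1}) (\<lambda>(t,\<theta>). \<Gamma> s t \<theta>)
         \<and> (\<forall>t\<in>cball 0 \<delta>. \<forall>\<theta>\<in>{0..1}.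
              \<pi> (\<Gamma> s t \<theta>) = \<pi> (Pt a b c i j k l) + complex_of_real (r s) * cis (2 * pi * \<theta>)
            \<and> Fprod a b c N Nn (\<Gamma> s t \<theta>) = t)
         \<and> (\<forall>t\<in>cball 0 \<delta>. \<Gamma> s t 0 = \<Gamma> s t 1)
         \<and> (\<forall>t\<in>cball 0 \<delta> - {0}. (\<Gamma> s t) C1_differentiable_on {0..1})
           \<comment> \<open>at t = 0 it is the lift into a line L through s\<close>
         \<and> ((\<forall>\<theta>\<in>{0..1}. Lf a b c i j (\<Gamma> s 0 \<theta>) = 0)
            \<or> (\<forall>\<theta>\<in>{0..1}. Lf a b c k l (\<Gamma> s 0 \<theta>) = 0)))
      \<and> bij_betw es {..<genus N Nn} (S_idx N Nn)
      \<and> bij_betw ea {..<genus N Nn} (alpha_tags N Nn)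
      \<longrightarrow>
        ((\<lambda>t::complex. Determinant.det (mat (genus N Nn) (genus N Nn)
              (\<lambda>(u,v). pairing (\<Gamma> (es u) t) (alpha_of a b c (ea v))))
            / (ln (cmod t)) ^ genus N Nn) \<longlongrightarrow> 1) (at 0)
      \<or> ((\<lambda>t::complex. Determinant.det (mat (genus N Nn) (genus N Nn)
              (\<lambda>(u,v). pairing (\<Gamma> (es u) t) (alpha_of a b c (ea v))))
            / (ln (cmod t)) ^ genus N Nn) \<longlongrightarrow> -1) (at 0))"
proof (unfold Let_def, intro allI impI, goal_cases)
  case (1 pr qr r \<delta> \<Gamma> es ea)
  from 1 have loops: "\<forall>s\<in>S_idx N Nn. admissible_loop a b c N Nn pr qr \<delta> s (r s) (\<Gamma> s)"
    unfolding admissible_loop_def xcoord_def by (elim conjE) assumption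
  from 1 have "\<forall>i\<in>{1..N}. pr * b i - qr * a i \<noteq> 0" "\<delta> > 0"
    "bij_betw es {..<genus N Nn} (S_idx N Nn)" "bij_betw ea {..<genus N Nn} (alpha_tags N Nn)"
    by blast+
  from regulator_det_limit[OF N2 Nn1 distinct_lines bracket no_triple this(1,2) loops this(3,4)]
  show ?case .
qed

end
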